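(* Let $X_i$, $i\ge1$, be i.i.d. standard normal random variables (so $\sigma^2=1$), and let $a_k=2^{k-1}$, $k\ge1$. Let $\xi_j$, $j\ge0$, be i.i.d. random variables each distributed as $\int_0^1\mathbb B(t)^2\,dt$, where $\mathbb B$ is a standard Brownian motion. Then $v_{2^m}\sim 2^{2m}/6$ and, as $m\to\infty$, $$\frac{V_{2^m}}{v_{2^m}}\Rightarrow\frac32\sum_{j=0}^\infty\frac{\xi_j}{4^j}.$$ In particular $V_n/v_n$ is not a consistent estimator of $\sigma^2$ for this sequence $(a_k)$.
   Context: $\Rightarrow$ denotes convergence in distribution and $a_n\sim b_n$ means $a_n/b_n\to1$. Given a strictly increasing integer sequence $(a_k)_{k\ge1}$ with $a_1=1$, define for $i\ge1$: $t_i=\max\{a_k:a_k\le i\}$, $W_i=X_{t_i}+X_{t_i+1}+\cdots+X_i$, $l_i=i-t_i+1$, $V_n=\sum_{i=1}^nW_i^2$, $v_n=\sum_{i=1}^nl_i$. *)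

theory Defs
  imports "HOL-Probability.Probability"
begin

definition tseq :: "(nat \<Rightarrow> nat) \<Rightarrow> nat \<Rightarrow> nat" where
  "tseq a i = Max {a k | k. 1 \<le> k \<and> a k \<le> i}"

definition Wsum :: "(nat \<Rightarrow> nat) \<Rightarrow> (nat \<Rightarrow> 'a \<Rightarrow> real) \<Rightarrow> nat \<Rightarrow> 'a \<Rightarrow> real" where
  "Wsum a X i \<omega> = (\<Sum>j = tseq a i..i. X j \<omega>)"

definition lseq :: "(nat \<Rightarrow> nat) \<Rightarrow> nat \<Rightarrow> nat" where
  "lseq a i = i - tseq a i + 1"

definition Vstat :: "(nat \<Rightarrow> nat) \<Rightarrow> (nat \<Rightarrow> 'a \<Rightarrow> real) \<Rightarrow> nat \<Rightarrow> 'a \<Rightarrow> real" where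
  "Vstat a X n \<omega> = (\<Sum>i = 1..n. (Wsum a X i \<omega>)\<^sup>2)"

definition vnorm :: "(nat \<Rightarrow> nat) \<Rightarrow> nat \<Rightarrow> nat" where
  "vnorm a n = (\<Sum>i = 1..n. lseq a i)"

definition brownian_motion :: "'b measure \<Rightarrow> (real \<Rightarrow> 'b \<Rightarrow> real) \<Rightarrow> bool" where
  "brownian_motion Q B \<longleftrightarrow>
     prob_space Q \<and>
     (\<forall>t\<ge>0. B t \<in> borel_measurable Q) \<and>
     (\<forall>\<omega>\<in>space Q. B 0 \<omega> = 0) \<and>
     (\<forall>\<omega>\<in>space Q. continuous_on {0..} (\<lambda>t. B t \<omega>)) \<and>
     (\<forall>s t. 0 \<le> s \<and> s < t \<longrightarrow>
        distributed Q lborel (\<lambda>\<omega>. B t \<omega> - B s \<omega>) (normal_density 0 (sqrt (t - s)))) \<and>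
     (\<forall>(tt :: nat \<Rightarrow> real) n. 0 \<le> tt 0 \<and> strict_mono tt \<longrightarrow>
        prob_space.indep_vars Q (\<lambda>_. borel) (\<lambda>i \<omega>. B (tt (Suc i)) \<omega> - B (tt i) \<omega>) {..<n})"

end

theory Submission
  imports Defs
begin

(*
  For 2^p \<le> i < 2^(p+1) the block start is t_i = 2^p, so W_i is a partial sum inside the
  dyadic block and v_(2^m) = (4^m + 3 * 2^m + 2) / 6 exactly; this gives v_(2^m) ~ 4^m / 6.

  V_(2^m) is the sum of the independent block statistics
  S_p = \<Sum>_(i<2^p) (X_(2^p) + ... + X_(2^p+i))^2, p < m, and of X_(2^m)^2. By Brownian
  scaling, S_p has the law of L^2 R_L with L = 2^p, where R_L = (1/L) \<Sum>_(i<L) B((i+1)/L)^2 is a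
  Riemann sum of I = \<integral>_0^1 B^2. Hence the characteristic function of V_(2^m)/v_(2^m) is a
  product of m factors E exp(i \<alpha> R_L). A Tannery-type argument, dominated via E R_L \<le> 1,
  shows that these products converge to the products of E exp(i t (3/2) 4^(-j) I), which
  converge to the characteristic function of (3/2) \<Sum>_j \<xi>_j / 4^j; Levy's continuity theorem
  concludes.

  For n = 4 * 2^q - 1 the statistic V_n dominates 2^q T^2 + 2 T G, where T
  is the N(0, 2^q) block sum over [2 * 2^q, 3 * 2^q) and G depends only on later variables.
  On the event {|T| \<ge> 3 sqrt(2^q), T G \<ge> 0}, whose probability is bounded below uniformly
  in q by independence, V_n / v_n > 2.
*)

section \<open>Dyadic block structure of the normalisation\<close>

lemma tseq_dyadic:
  assumes a_def: "\<And>k. a k = 2 ^ (k - 1)" and "2^p \<le> i" "i < 2^(Suc p)"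
  shows "tseq a i = 2^p"
proof -
  have S: "{a k | k. 1 \<le> k \<and> a k \<le> i} = {(2::nat)^(k-1) | k. 1 \<le> k \<and> (2::nat)^(k-1) \<le> i}"
    unfolding a_def ..
  have fin: "finite {(2::nat)^(k-1) | k. 1 \<le> k \<and> (2::nat)^(k-1) \<le> i}"
    by (rule finite_subset[of _ "{..i}"]) blast+
  show ?thesis unfolding tseq_def S
  proof (rule Max_eqI[OF fin])
    fix y assume "y \<in> {(2::nat)^(k-1) | k. 1 \<le> k \<and> (2::nat)^(k-1) \<le> i}"
    then obtain k where k: "y = 2^(k-1)" "2^(k-1) \<le> i" by blast
    have "(2::nat)^(k-1) < 2^(Suc p)" using k(2) assms(3) by (rule le_less_trans)
    then have "k - 1 < Suc p" using power_less_imp_less_exp[of "2::nat" "k-1" "Suc p"] by simp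
    then have "k - 1 \<le> p" by simp
    then show "y \<le> 2^p" unfolding k(1) by (rule power_increasing) simp
  next
    show "(2::nat)^p \<in> {(2::nat)^(k-1) | k. 1 \<le> k \<and> (2::nat)^(k-1) \<le> i}"
      using assms(2) by (intro CollectI exI[of _ "Suc p"]) simp
  qed
qed

lemma lseq_dyadic:
  assumes a_def: "\<And>k. a k = 2 ^ (k - 1)" and "2^p \<le> i" "i < 2^(Suc p)"
  shows "lseq a i = i - 2^p + 1"
  using tseq_dyadic[OF assms] by (simp add: lseq_def)

lemma tseq_ge_1:
  assumes a_def: "\<And>k. a k = 2 ^ (k - 1)" and "1 \<le> i"
  shows "1 \<le> tseq a i"
proof -
  obtain p where "2^p \<le> i" "i < 2^(Suc p)" using ex_power_ivl1[of 2 i] assms(2) by auto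
  then show ?thesis using tseq_dyadic[OF a_def] by simp
qed

lemma vnorm_Suc: "vnorm a (Suc n) = vnorm a n + lseq a (Suc n)"
  by (simp add: vnorm_def)

text \<open>Inside a block the lengths l_i grow by one, so v grows quadratically.\<close>

lemma vnorm_within_block:
  assumes a_def: "\<And>k. a k = 2 ^ (k - 1)" and "r < 2^p"
  shows "2 * vnorm a (2^p + r) = 2 * vnorm a (2^p) + r * (r + 3)"
  using assms(2)
proof (induction r)
  case (Suc r)
  have "lseq a (Suc (2^p + r)) = r + 2"
    using lseq_dyadic[OF a_def, of p "Suc (2^p + r)"] Suc.prems by simp
  then show ?case using Suc by (simp add: vnorm_Suc algebra_simps)
qed simp

lemma vnorm_pow2_nat:
  assumes a_def: "\<And>k. a k = 2 ^ (k - 1)"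
  shows "6 * vnorm a (2^p) = 4^p + 3 * 2^p + 2"
proof (induction p)
  case 0 then show ?case
    using lseq_dyadic[OF a_def, of 0 1] by (simp add: vnorm_def)
next
  case (Suc p)
  have pos: "(1::nat) \<le> 2^p" by simp
  obtain q where q: "(2::nat)^p = Suc q" using pos by (metis One_nat_def Suc_le_D)
  have four: "(4::nat)^p = Suc q * Suc q" using power_mult_distrib[of "2::nat" 2 p] q by simp
  have block: "2 * vnorm a (2^p + q) = 2 * vnorm a (2^p) + q * (q + 3)"
    by (rule vnorm_within_block[OF a_def]) (simp add: q)
  have last: "lseq a (2^Suc p) = 1"
    using lseq_dyadic[OF a_def, of "Suc p" "2^Suc p"] by simp
  have "(2::nat)^Suc p = Suc (2^p + q)" using q by simp
  then have "vnorm a (2^Suc p) = vnorm a (2^p + q) + lseq a (2^Suc p)"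
    by (metis vnorm_Suc)
  then have "6 * vnorm a (2^Suc p) = 6 * vnorm a (2^p) + 3 * (q * (q + 3)) + 6"
    using block last by linarith
  also have "\<dots> = 4 * (Suc q * Suc q) + 3 * (2 * Suc q) + 2"
    using Suc.IH four q by (simp add: algebra_simps)
  also have "\<dots> = 4 ^ Suc p + 3 * 2 ^ Suc p + 2"
    using four q by simp
  finally show ?case .
qed

lemma vnorm_pow2:
  assumes a_def: "\<And>k. a k = 2 ^ (k - 1)"
  shows "real (vnorm a (2^p)) = (4^p + 3 * 2^p + 2) / 6"
proof -
  have "real (6 * vnorm a (2^p)) = real (4^p + 3 * 2^p + 2)" by (simp only: vnorm_pow2_nat[OF a_def])
  then show ?thesis by simp
qed

lemma vnorm_pow2_pred:
  assumes a_def: "\<And>k. a k = 2 ^ (k - 1)"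
  shows "real (vnorm a (2^p - 1)) = (4^p + 3 * 2^p - 4) / 6"
proof -
  have "vnorm a (2^p) = vnorm a (2^p - 1) + lseq a (2^p)"
    using vnorm_Suc[of a "2^p - 1"] by simp
  moreover have "lseq a (2^p) = 1" using lseq_dyadic[OF a_def, of p "2^p"] by simp
  ultimately show ?thesis using vnorm_pow2[OF a_def, of p] by simp
qed

lemma vnorm_pow2_asymp:
  assumes a_def: "\<And>k. a k = 2 ^ (k - 1)"
  shows "(\<lambda>m. real (vnorm a (2 ^ m)) / (2 ^ (2 * m) / 6)) \<longlonglongrightarrow> 1"
proof -
  have e: "real (vnorm a (2 ^ m)) / (2 ^ (2 * m) / 6) = 1 + 3 * (1/2)^m + 2 * (1/4)^m" for m
  proof -
    have "(2::real) ^ (2*m) = 4^m" by (simp add: power_mult)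
    moreover have "(4::real)^m = 2^m * 2^m" by (simp add: power_mult_distrib[symmetric])
    ultimately show ?thesis using vnorm_pow2[OF a_def, of m]
      by (simp add: field_simps power_divide)
  qed
  have "(\<lambda>m. 1 + 3 * (1/2::real)^m + 2 * (1/4)^m) \<longlonglongrightarrow> 1 + 3 * 0 + 2 * 0"
    by (intro tendsto_intros LIMSEQ_power_zero) auto
  then show ?thesis unfolding e by simp
qed

section \<open>Riemann sums\<close>

lemma integral_increment_approx:
  fixes f :: "real \<Rightarrow> real"
  assumes cont: "continuous_on {0..1} f" and ab: "0 \<le> a" "a \<le> b" "b \<le> 1"
    and close: "\<And>x. x \<in> {a..b} \<Longrightarrow> \<bar>f x - f b\<bar> \<le> e"
  shows "\<bar>integral {0..b} f - integral {0..a} f - f b * (b - a)\<bar> \<le> e * (b - a)"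
proof -
  define F where "F x = integral {0..x} f" for x
  have sub: "{a..b} \<subseteq> {0..1}" using ab by auto
  have "\<exists>x\<in>{a..b}. F b - F a = (\<lambda>h. h * f x) (b - a)"
  proof (rule mvt_very_simple[OF ab(2)])
    fix x assume "a \<le> x" "x \<le> b"
    then have x: "x \<in> {0..1}" using sub by auto
    have "(F has_real_derivative f x) (at x within {0..1})"
      unfolding F_def by (rule integral_has_real_derivative[OF cont x])
    then have "(F has_real_derivative f x) (at x within {a..b})"
      using has_field_derivative_subset sub by blast
    then show "(F has_derivative (\<lambda>h. h * f x)) (at x within {a..b})"
      by (simp add: has_field_derivative_def mult.commute[of _ "f x"])
  qed
  then obtain x where x: "x \<in> {a..b}" "F b - F a = (b - a) * f x" by auto
  have "F b - F a - f b * (b - a) = (f x - f b) * (b - a)"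
    using x(2) by (simp add: algebra_simps)
  then have "\<bar>F b - F a - f b * (b - a)\<bar> = \<bar>f x - f b\<bar> * (b - a)"
    using ab(2) by (simp add: abs_mult)
  also have "\<dots> \<le> e * (b - a)" using close[OF x(1)] ab(2) by (intro mult_right_mono) auto
  finally show ?thesis unfolding F_def .
qed

lemma riemann_sum_conv:
  fixes f :: "real \<Rightarrow> real"
  assumes cont: "continuous_on {0..1} f"
  shows "(\<lambda>n. (\<Sum>i<n. f (real (Suc i) / real n)) / real n) \<longlonglongrightarrow> integral {0..1} f"
proof (rule LIMSEQ_I)
  fix e :: real assume e: "0 < e"
  have "uniformly_continuous_on {0..1} f"
    by (rule compact_uniformly_continuous[OF cont]) simp
  from this[unfolded uniformly_continuous_on_def, rule_format, of "e/2"] e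
  obtain d where d: "d > 0"
    "\<And>x x'. x \<in> {0..1} \<Longrightarrow> x' \<in> {0..1} \<Longrightarrow> dist x' x < d \<Longrightarrow> dist (f x') (f x) < e/2"
    by auto
  obtain N :: nat where N: "N \<noteq> 0" "inverse (real N) < d" using real_arch_inverse d(1) by blast
  show "\<exists>no. \<forall>n\<ge>no. norm ((\<Sum>i<n. f (real (Suc i) / real n)) / real n - integral {0..1} f) < e"
  proof (intro exI allI impI)
    fix n assume n: "N \<le> n"
    then have n_pos: "n > 0" using N(1) by simp
    have "1 / real n \<le> 1 / real N" using n N(1) by (simp add: frac_le)
    then have mesh: "1 / real n < d" using N(2) by (simp add: inverse_eq_divide)
    let ?F = "\<lambda>i. integral {0..real i / real n} f"
    have step: "\<bar>?F (Suc i) - ?F i - f (real (Suc i) / n) * (1 / n)\<bar> \<le> e/2 * (1 / n)" if i: "i < n" for i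
    proof -
      have len: "real (Suc i) / n - real i / n = 1 / n" by (simp add: diff_divide_distrib[symmetric])
      have b1: "real (Suc i) / n \<le> 1" using i n_pos by (simp add: field_simps)
      have a0: "0 \<le> real i / n" by simp
      have ab: "real i / n \<le> real (Suc i) / n" by (simp add: divide_right_mono)
      have close: "\<bar>f x - f (real (Suc i) / n)\<bar> \<le> e/2" if "x \<in> {real i / n..real (Suc i) / n}" for x
      proof -
        have "x \<in> {0..1}" "dist x (real (Suc i) / n) < d"
          using that b1 mesh len order_trans[of 0 "real i / n" x] by (auto simp: dist_real_def)
        then show ?thesis using d(2)[of "real (Suc i) / n" x] b1 by (simp add: dist_real_def)
      qed
      from integral_increment_approx[OF cont a0 ab b1 close] show ?thesis unfolding len .
    qed
    have "(\<Sum>i<n. ?F (Suc i) - ?F i) = integral {0..1} f"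
      using sum_lessThan_telescope[of ?F n] n_pos by simp
    then have "\<bar>(\<Sum>i<n. f (real (Suc i) / real n)) / real n - integral {0..1} f\<bar>
        = \<bar>\<Sum>i<n. ?F (Suc i) - ?F i - f (real (Suc i) / n) * (1 / n)\<bar>"
      by (simp add: sum_subtractf sum_divide_distrib abs_minus_commute)
    also have "\<dots> \<le> (\<Sum>i<n. e/2 * (1 / n))"
      by (rule order_trans[OF sum_abs sum_mono]) (use step in auto)
    also have "\<dots> < e" using n_pos e by simp
    finally show "norm ((\<Sum>i<n. f (real (Suc i) / real n)) / real n - integral {0..1} f) < e"
      by simp
  qed
qed

lemma riemann_sum_conv_LBINT:
  fixes f :: "real \<Rightarrow> real"
  assumes cont: "continuous_on {0..1} f"
  shows "(\<lambda>n. (\<Sum>i<n. f (real (Suc i) / real n)) / real n) \<longlonglongrightarrow> (LBINT t=0..1. f t)"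
proof -
  have "set_integrable lborel {0..1} f" by (rule borel_integrable_atLeastAtMost'[OF cont])
  then have "(LBINT t=0..1. f t) = integral {0..1} f"
    using interval_integral_eq_integral[of 0 1 f] by (simp add: zero_ereal_def one_ereal_def)
  then show ?thesis using riemann_sum_conv[OF cont] by simp
qed

section \<open>General probability facts\<close>

lemma (in prob_space) indep_sets_reindex:
  assumes ind: "indep_sets F I" and inj: "inj_on f J" and sub: "f ` J \<subseteq> I"
  shows "indep_sets (\<lambda>j. F (f j)) J"
  unfolding indep_sets_def
proof (intro conjI ballI allI impI)
  fix j assume "j \<in> J" then show "F (f j) \<subseteq> events" using ind sub unfolding indep_sets_def by auto
next
  fix K A assume K: "K \<subseteq> J" "K \<noteq> {}" "finite K" and A: "A \<in> Pi K (\<lambda>j. F (f j))"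
  have injK: "inj_on f K" using inj K(1) by (rule inj_on_subset)
  define A' where "A' i = A (the_inv_into K f i)" for i
  have A'f: "A' (f k) = A k" if "k \<in> K" for k
    unfolding A'_def using the_inv_into_f_f[OF injK that] by simp
  have "prob (\<Inter>i\<in>f ` K. A' i) = (\<Prod>i\<in>f ` K. prob (A' i))"
  proof (rule ind[unfolded indep_sets_def, THEN conjunct2, rule_format])
    show "f ` K \<subseteq> I" using K sub by auto
    show "f ` K \<noteq> {}" using K by auto
    show "finite (f ` K)" using K by auto
    show "A' \<in> Pi (f ` K) F" using A A'f by auto
  qed
  moreover have "(\<Inter>i\<in>f ` K. A' i) = (\<Inter>k\<in>K. A k)" using A'f by auto
  moreover have "(\<Prod>i\<in>f ` K. prob (A' i)) = (\<Prod>k\<in>K. prob (A k))"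
    using prod.reindex[OF injK, of "\<lambda>i. prob (A' i)"] A'f by simp
  ultimately show "prob (\<Inter>k\<in>K. A k) = (\<Prod>k\<in>K. prob (A k))" by simp
qed

lemma (in prob_space) indep_vars_reindex:
  assumes ind: "indep_vars M' X I" and inj: "inj_on f J" and sub: "f ` J \<subseteq> I"
  shows "indep_vars (\<lambda>j. M' (f j)) (\<lambda>j. X (f j)) J"
  unfolding indep_vars_def2
proof (intro conjI ballI)
  fix j assume "j \<in> J" then show "random_variable (M' (f j)) (X (f j))"
    using ind sub unfolding indep_vars_def2 by blast
next
  have "indep_sets (\<lambda>i. {X i -` A \<inter> space M |A. A \<in> sets (M' i)}) I"
    using ind unfolding indep_vars_def2 by blast
  from indep_sets_reindex[OF this inj sub]
  show "indep_sets (\<lambda>j. {X (f j) -` A \<inter> space M |A. A \<in> sets (M' (f j))}) J" .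
qed

lemma (in prob_space) distr_restrict_iid:
  assumes J: "J \<noteq> {}" and indep: "indep_vars (\<lambda>_. borel) Z J"
    and law: "\<And>j. j \<in> J \<Longrightarrow> distr M borel (Z j) = \<mu>"
  shows "distr M (PiM J (\<lambda>_. borel)) (\<lambda>x. \<lambda>i\<in>J. Z i x) = PiM J (\<lambda>_. \<mu>)"
proof -
  have "\<And>j. j \<in> J \<Longrightarrow> Z j \<in> borel_measurable M" using indep unfolding indep_vars_def2 by simp
  then have "distr M (PiM J (\<lambda>_. borel)) (\<lambda>x. \<lambda>i\<in>J. Z i x) = PiM J (\<lambda>i. distr M borel (Z i))"
    using indep_vars_iff_distr_eq_PiM'[OF J, where M'="\<lambda>_. borel" and X=Z] indep by blast
  also have "\<dots> = PiM J (\<lambda>_. \<mu>)" by (rule PiM_cong) (auto simp: law)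
  finally show ?thesis .
qed

lemma distr_fun_of_iid_eq:
  fixes Z :: "'i \<Rightarrow> 'a \<Rightarrow> real" and W :: "'i \<Rightarrow> 'b \<Rightarrow> real"
  assumes M: "prob_space M" and N: "prob_space N" and J: "J \<noteq> {}"
    and iZ: "prob_space.indep_vars M (\<lambda>_. borel) Z J"
    and iW: "prob_space.indep_vars N (\<lambda>_. borel) W J"
    and dZ: "\<And>j. j \<in> J \<Longrightarrow> distr M borel (Z j) = \<mu>"
    and dW: "\<And>j. j \<in> J \<Longrightarrow> distr N borel (W j) = \<mu>"
    and g: "g \<in> borel_measurable (PiM J (\<lambda>_. borel))"
  shows "distr M borel (\<lambda>\<omega>. g (\<lambda>j\<in>J. Z j \<omega>)) = distr N borel (\<lambda>\<omega>. g (\<lambda>j\<in>J. W j \<omega>))"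
proof -
  have vZ: "(\<lambda>x. \<lambda>i\<in>J. Z i x) \<in> measurable M (PiM J (\<lambda>_. borel))"
    using iZ by (intro measurable_restrict) (simp add: prob_space.indep_vars_def2[OF M])
  have vW: "(\<lambda>x. \<lambda>i\<in>J. W i x) \<in> measurable N (PiM J (\<lambda>_. borel))"
    using iW by (intro measurable_restrict) (simp add: prob_space.indep_vars_def2[OF N])
  have "distr M borel (\<lambda>\<omega>. g (\<lambda>j\<in>J. Z j \<omega>)) = distr (distr M (PiM J (\<lambda>_. borel)) (\<lambda>x. \<lambda>i\<in>J. Z i x)) borel g"
    using distr_distr[OF g vZ] by (simp add: comp_def)
  also have "\<dots> = distr (distr N (PiM J (\<lambda>_. borel)) (\<lambda>x. \<lambda>i\<in>J. W i x)) borel g"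
    using prob_space.distr_restrict_iid[OF M J iZ dZ] prob_space.distr_restrict_iid[OF N J iW dW]
    by simp
  also have "\<dots> = distr N borel (\<lambda>\<omega>. g (\<lambda>j\<in>J. W j \<omega>))"
    using distr_distr[OF g vW] by (simp add: comp_def)
  finally show ?thesis .
qed

lemma char_distr_integral:
  assumes "f \<in> borel_measurable M"
  shows "char (distr M borel f) t = (CLINT x|M. iexp (t * f x))"
  unfolding char_def using assms by (subst integral_distr) auto

lemma char_distr_scale:
  assumes "f \<in> borel_measurable M"
  shows "char (distr M borel (\<lambda>x. c * f x)) t = char (distr M borel f) (t * c)"
  using assms by (simp add: char_distr_integral mult.assoc)

lemma iexp_dist_le_abs: "cmod (iexp x - iexp y) \<le> \<bar>x - y\<bar>"
proof -
  have "iexp x - iexp y = iexp y * (iexp (x - y) - 1)"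
    by (simp add: algebra_simps flip: exp_add)
  moreover have "cmod (iexp (x - y) - 1) \<le> \<bar>x - y\<bar>"
    using iexp_approx1[of "x - y" 0] by simp
  ultimately show ?thesis by (simp add: norm_mult)
qed

lemma iexp_dist_le_2: "cmod (iexp x - iexp y) \<le> 2"
  using norm_triangle_ineq4[of "iexp x" "iexp y"] by simp

lemma (in prob_space) integrable_iexp:
  "f \<in> borel_measurable M \<Longrightarrow> integrable M (\<lambda>\<omega>. iexp (f \<omega>))"
  by (rule integrable_const_bound[where B=1]) auto

lemma (in prob_space) integrable_iexp_dist:
  assumes [measurable]: "f \<in> borel_measurable M" "g \<in> borel_measurable M"
  shows "integrable M (\<lambda>\<omega>. cmod (iexp (f \<omega>) - iexp (g \<omega>)))"
  by (rule integrable_const_bound[where B=2]) (auto simp del: of_real_mult intro!: iexp_dist_le_2)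

text \<open>Products of characteristic-function values differ by at most the sum of the
  L1-distances of the factors, since all factors have modulus at most 1.\<close>

lemma (in prob_space) char_prod_diff_le:
  assumes f: "\<And>j. f j \<in> borel_measurable M" and g: "\<And>j. g j \<in> borel_measurable M"
  shows "cmod ((\<Prod>j<m. CLINT \<omega>|M. iexp (f j \<omega>)) - (\<Prod>j<m. CLINT \<omega>|M. iexp (g j \<omega>)))
     \<le> (\<Sum>j<m. \<integral>\<omega>. cmod (iexp (f j \<omega>) - iexp (g j \<omega>)) \<partial>M)"
proof -
  have unit: "cmod (CLINT \<omega>|M. iexp (h \<omega>)) \<le> 1" for h
    using integral_norm_bound[of M "\<lambda>\<omega>. iexp (h \<omega>)"] by (simp add: prob_space)
  have "cmod ((\<Prod>j<m. CLINT \<omega>|M. iexp (f j \<omega>)) - (\<Prod>j<m. CLINT \<omega>|M. iexp (g j \<omega>)))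
     \<le> (\<Sum>j<m. cmod ((CLINT \<omega>|M. iexp (f j \<omega>)) - (CLINT \<omega>|M. iexp (g j \<omega>))))"
    by (rule norm_prod_diff) (rule unit)+
  also have "\<dots> \<le> (\<Sum>j<m. \<integral>\<omega>. cmod (iexp (f j \<omega>) - iexp (g j \<omega>)) \<partial>M)"
  proof (rule sum_mono)
    fix j
    have diff: "(CLINT \<omega>|M. iexp (f j \<omega>)) - (CLINT \<omega>|M. iexp (g j \<omega>))
        = (CLINT \<omega>|M. iexp (f j \<omega>) - iexp (g j \<omega>))"
      by (rule Bochner_Integration.integral_diff[symmetric]) (intro integrable_iexp f g)+
    show "cmod ((CLINT \<omega>|M. iexp (f j \<omega>)) - (CLINT \<omega>|M. iexp (g j \<omega>)))
        \<le> (\<integral>\<omega>. cmod (iexp (f j \<omega>) - iexp (g j \<omega>)) \<partial>M)"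
      unfolding diff by (rule integral_norm_bound)
  qed
  finally show ?thesis .
qed

lemma (in prob_space) tendsto_integral_iexp_dist:
  fixes f :: "nat \<Rightarrow> 'a \<Rightarrow> real" and g :: "'a \<Rightarrow> real"
  assumes f_meas: "\<And>m. f m \<in> borel_measurable M" and g_meas: "g \<in> borel_measurable M"
    and f_lim: "\<And>\<omega>. \<omega> \<in> space M \<Longrightarrow> (\<lambda>m. f m \<omega>) \<longlonglongrightarrow> g \<omega>"
  shows "(\<lambda>m. \<integral>\<omega>. cmod (iexp (f m \<omega>) - iexp (g \<omega>)) \<partial>M) \<longlonglongrightarrow> 0"
proof -
  have "(\<lambda>m. \<integral>\<omega>. cmod (iexp (f m \<omega>) - iexp (g \<omega>)) \<partial>M) \<longlonglongrightarrow> (\<integral>\<omega>. 0 \<partial>M)"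
  proof (rule integral_dominated_convergence[where w="\<lambda>_. 2"])
    show "(\<lambda>\<omega>. cmod (iexp (f m \<omega>) - iexp (g \<omega>))) \<in> borel_measurable M" for m
      using f_meas[of m] g_meas by measurable
    show "AE \<omega> in M. norm (cmod (iexp (f m \<omega>) - iexp (g \<omega>))) \<le> 2" for m
      by (simp del: of_real_mult add: iexp_dist_le_2)
    show "AE \<omega> in M. (\<lambda>m. cmod (iexp (f m \<omega>) - iexp (g \<omega>))) \<longlonglongrightarrow> 0"
    proof (rule AE_I2)
      fix \<omega> assume "\<omega> \<in> space M"
      then have "(\<lambda>m. iexp (f m \<omega>)) \<longlonglongrightarrow> iexp (g \<omega>)"
        by (intro tendsto_intros f_lim)
      then show "(\<lambda>m. cmod (iexp (f m \<omega>) - iexp (g \<omega>))) \<longlonglongrightarrow> 0"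
        by (intro tendsto_norm_zero) (simp add: Lim_null[symmetric])
    qed
  qed simp_all
  then show ?thesis by simp
qed

text \<open>Tannery's theorem for products of characteristic-function values: if the exponents
  converge pointwise and their distances are dominated by integrable functions whose
  integrals are bounded by a summable sequence, the products of length m converge together.\<close>

lemma (in prob_space) tendsto_char_prod:
  fixes f :: "nat \<Rightarrow> nat \<Rightarrow> 'a \<Rightarrow> real" and g :: "nat \<Rightarrow> 'a \<Rightarrow> real"
    and d :: "nat \<Rightarrow> nat \<Rightarrow> 'a \<Rightarrow> real" and b :: "nat \<Rightarrow> real"
  assumes f_meas: "\<And>m j. f m j \<in> borel_measurable M" and g_meas: "\<And>j. g j \<in> borel_measurable M"
    and f_lim: "\<And>j \<omega>. \<omega> \<in> space M \<Longrightarrow> (\<lambda>m. f m j \<omega>) \<longlonglongrightarrow> g j \<omega>"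
    and d_int: "\<And>m j. j < m \<Longrightarrow> integrable M (d m j)"
    and d_dom: "\<And>m j \<omega>. j < m \<Longrightarrow> \<omega> \<in> space M \<Longrightarrow> \<bar>f m j \<omega> - g j \<omega>\<bar> \<le> d m j \<omega>"
    and d_bound: "\<And>m j. j < m \<Longrightarrow> (\<integral>\<omega>. d m j \<omega> \<partial>M) \<le> b j"
    and b_summable: "summable b"
  shows "(\<lambda>m. (\<Prod>j<m. CLINT \<omega>|M. iexp (f m j \<omega>)) - (\<Prod>j<m. CLINT \<omega>|M. iexp (g j \<omega>))) \<longlonglongrightarrow> 0"
proof -
  define h where "h m j = (if j < m then \<integral>\<omega>. cmod (iexp (f m j \<omega>) - iexp (g j \<omega>)) \<partial>M else 0)"
    for m j
  have h_int_le_d: "(\<integral>\<omega>. cmod (iexp (f m j \<omega>) - iexp (g j \<omega>)) \<partial>M) \<le> (\<integral>\<omega>. d m j \<omega> \<partial>M)"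
    if "j < m" for m j
    using d_dom[OF that] by (intro integral_mono integrable_iexp_dist f_meas g_meas d_int[OF that])
      (rule order_trans[OF iexp_dist_le_abs])
  have h_bound: "norm (h m j) \<le> b j" for m j
  proof (cases "j < m")
    case True
    then show ?thesis using h_int_le_d[OF True] d_bound[OF True] by (simp add: h_def)
  next
    case False
    have "0 \<le> (\<integral>\<omega>. cmod (iexp (f (Suc j) j \<omega>) - iexp (g j \<omega>)) \<partial>M)" by simp
    then have "0 \<le> b j" using h_int_le_d[OF lessI[of j]] d_bound[OF lessI[of j]] by linarith
    then show ?thesis using False by (simp add: h_def)
  qed
  have h_lim: "(\<lambda>m. h m j) \<longlonglongrightarrow> 0" for j
  proof -
    have "\<forall>\<^sub>F m in sequentially. h m j = (\<integral>\<omega>. cmod (iexp (f m j \<omega>) - iexp (g j \<omega>)) \<partial>M)"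
      by (rule eventually_sequentiallyI[of "Suc j"]) (simp add: h_def)
    with tendsto_integral_iexp_dist[OF f_meas g_meas f_lim] show ?thesis
      by (simp add: tendsto_cong)
  qed
  have "(\<lambda>m. suminf (h m)) \<longlonglongrightarrow> (\<Sum>j. 0::real)"
    using tannerys_theorem[where a="\<lambda>j m. h m j" and b="\<lambda>_. 0" and M=b and F=sequentially]
      h_lim h_bound b_summable by (simp add: always_eventually)
  moreover have "suminf (h m) = (\<Sum>j<m. h m j)" for m
    by (rule suminf_finite) (auto simp: h_def)
  ultimately have sum_lim: "(\<lambda>m. \<Sum>j<m. h m j) \<longlonglongrightarrow> 0" by simp
  have bound: "norm (cmod ((\<Prod>j<m. CLINT \<omega>|M. iexp (f m j \<omega>)) - (\<Prod>j<m. CLINT \<omega>|M. iexp (g j \<omega>))))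
      \<le> (\<Sum>j<m. h m j)" for m
  proof -
    have "(\<Sum>j<m. h m j) = (\<Sum>j<m. \<integral>\<omega>. cmod (iexp (f m j \<omega>) - iexp (g j \<omega>)) \<partial>M)"
      by (intro sum.cong refl) (simp add: h_def)
    then show ?thesis
      using char_prod_diff_le[where f="f m" and g=g and m=m, OF f_meas g_meas]
      by (simp only: real_norm_def abs_norm_cancel)
  qed
  show ?thesis
    by (rule tendsto_norm_zero_cancel, rule Lim_null_comparison[OF always_eventually sum_lim],
        rule allI, rule bound)
qed

lemma (in prob_space) AE_summable_weighted_series:
  fixes \<xi> :: "nat \<Rightarrow> 'a \<Rightarrow> real" and w :: "nat \<Rightarrow> real" and K :: ennreal
  assumes meas: "\<And>j. \<xi> j \<in> borel_measurable M" and nonneg: "\<And>j. AE \<omega> in M. 0 \<le> \<xi> j \<omega>"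
    and moment: "\<And>j. (\<integral>\<^sup>+\<omega>. ennreal (\<xi> j \<omega>) \<partial>M) \<le> K" and K: "K \<noteq> \<infinity>"
    and w_nonneg: "\<And>j. 0 \<le> w j" and w_summable: "summable w"
  shows "AE \<omega> in M. summable (\<lambda>j. w j * \<xi> j \<omega>)"
proof -
  have "(\<integral>\<^sup>+\<omega>. (\<Sum>j. ennreal (w j * \<xi> j \<omega>)) \<partial>M) = (\<Sum>j. \<integral>\<^sup>+\<omega>. ennreal (w j * \<xi> j \<omega>) \<partial>M)"
    using meas by (intro nn_integral_suminf) measurable
  also have "\<dots> = (\<Sum>j. ennreal (w j) * \<integral>\<^sup>+\<omega>. ennreal (\<xi> j \<omega>) \<partial>M)"
    using meas by (simp add: ennreal_mult' w_nonneg nn_integral_cmult)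
  also have "\<dots> \<le> (\<Sum>j. ennreal (w j) * K)"
    by (intro suminf_le mult_left_mono moment) auto
  also have "\<dots> = ennreal (\<Sum>j. w j) * K"
    by (simp add: suminf_ennreal2 w_nonneg w_summable)
  also have "\<dots> < \<infinity>" using K by (simp add: ennreal_mult_less_top less_top)
  finally have "AE \<omega> in M. (\<Sum>j. ennreal (w j * \<xi> j \<omega>)) \<noteq> \<infinity>"
    using meas by (intro nn_integral_PInf_AE) auto
  moreover have "AE \<omega> in M. \<forall>j. 0 \<le> \<xi> j \<omega>"
    using nonneg by (simp add: AE_all_countable)
  ultimately show ?thesis
  proof eventually_elim
    case (elim \<omega>)
    then show ?case by (intro summable_suminf_not_top) (auto simp: w_nonneg)
  qed
qed

lemma (in prob_space) char_weighted_series: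
  fixes \<xi> :: "nat \<Rightarrow> 'a \<Rightarrow> real" and w :: "nat \<Rightarrow> real"
  assumes indep: "indep_vars (\<lambda>_. borel) \<xi> UNIV"
    and summ: "AE \<omega> in M. summable (\<lambda>j. w j * \<xi> j \<omega>)"
  shows "(\<lambda>J. \<Prod>j<J. char (distr M borel (\<xi> j)) (t * c * w j))
           \<longlonglongrightarrow> char (distr M borel (\<lambda>\<omega>. c * (\<Sum>j. w j * \<xi> j \<omega>))) t"
proof -
  have meas[measurable]: "\<xi> j \<in> borel_measurable M" for j
    using indep unfolding indep_vars_def2 by simp
  define S where "S J \<omega> = (\<Sum>j<J. c * w j * \<xi> j \<omega>)" for J \<omega>
  have S_meas[measurable]: "S J \<in> borel_measurable M" for J unfolding S_def by measurable
  have char_S: "char (distr M borel (S J)) t = (\<Prod>j<J. char (distr M borel (\<xi> j)) (t * c * w j))"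
    for J
  proof -
    have "indep_vars (\<lambda>_. borel) (\<lambda>j \<omega>. c * w j * \<xi> j \<omega>) {..<J}"
      using indep_vars_compose2[OF indep_vars_subset[OF indep, of "{..<J}"],
          of "\<lambda>j x. c * w j * x" "\<lambda>_. borel"] by simp
    then have "char (distr M borel (S J)) t = (\<Prod>j<J. char (distr M borel (\<lambda>\<omega>. c * w j * \<xi> j \<omega>)) t)"
      unfolding S_def by (rule char_distr_sum)
    also have "\<dots> = (\<Prod>j<J. char (distr M borel (\<xi> j)) (t * c * w j))"
      by (intro prod.cong refl) (simp add: char_distr_scale mult.assoc)
    finally show ?thesis .
  qed
  have lim_meas: "(\<lambda>\<omega>. c * (\<Sum>j. w j * \<xi> j \<omega>)) \<in> borel_measurable M" by measurable
  have "(\<lambda>J. char (distr M borel (S J)) t) \<longlonglongrightarrow> char (distr M borel (\<lambda>\<omega>. c * (\<Sum>j. w j * \<xi> j \<omega>))) t"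
    unfolding char_distr_integral[OF S_meas] char_distr_integral[OF lim_meas]
  proof (rule integral_dominated_convergence[where w="\<lambda>_. 1"])
    show "AE \<omega> in M. (\<lambda>J. iexp (t * S J \<omega>)) \<longlonglongrightarrow> iexp (t * (c * (\<Sum>j. w j * \<xi> j \<omega>)))"
      using summ
    proof eventually_elim
      case (elim \<omega>)
      have "(\<lambda>J. c * (\<Sum>j<J. w j * \<xi> j \<omega>)) \<longlonglongrightarrow> c * (\<Sum>j. w j * \<xi> j \<omega>)"
        by (intro tendsto_mult_left summable_LIMSEQ[OF elim])
      moreover have "c * (\<Sum>j<J. w j * \<xi> j \<omega>) = S J \<omega>" for J
        unfolding S_def by (simp add: sum_distrib_left mult.assoc)
      ultimately show ?case by (intro tendsto_intros) simp
    qed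
  qed (simp_all del: of_real_mult)
  then show ?thesis unfolding char_S .
qed

lemma (in prob_space) prob_tail_same_sign:
  fixes N G :: "'a \<Rightarrow> real"
  assumes indep: "indep_var borel N borel G"
  shows "min (prob {\<omega> \<in> space M. r \<le> N \<omega>}) (prob {\<omega> \<in> space M. N \<omega> \<le> s})
    \<le> prob {\<omega> \<in> space M. (r \<le> N \<omega> \<and> 0 \<le> G \<omega>) \<or> (N \<omega> \<le> s \<and> G \<omega> < 0)}"
proof -
  have N_meas[measurable]: "N \<in> borel_measurable M" and G_meas[measurable]: "G \<in> borel_measurable M"
    using indep unfolding indep_var_eq by auto
  define c where "c = min (prob {\<omega> \<in> space M. r \<le> N \<omega>}) (prob {\<omega> \<in> space M. N \<omega> \<le> s})"
  have prod_event: "prob {\<omega> \<in> space M. N \<omega> \<in> A \<and> G \<omega> \<in> C}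
      = prob {\<omega> \<in> space M. N \<omega> \<in> A} * prob {\<omega> \<in> space M. G \<omega> \<in> C}"
    if "A \<in> sets borel" "C \<in> sets borel" for A C
  proof -
    have "prob ((\<lambda>x. (N x, G x)) -` (A \<times> C) \<inter> space M) = prob (N -` A \<inter> space M) * prob (G -` C \<inter> space M)"
      by (rule indep_varD[OF indep that])
    moreover have "(\<lambda>x. (N x, G x)) -` (A \<times> C) \<inter> space M = {\<omega> \<in> space M. N \<omega> \<in> A \<and> G \<omega> \<in> C}" by auto
    ultimately show ?thesis by (simp add: vimage_def Int_def conj_commute)
  qed
  have split_G: "prob {\<omega> \<in> space M. 0 \<le> G \<omega>} + prob {\<omega> \<in> space M. G \<omega> < 0} = 1"
  proof -
    have "G -` {0..} \<inter> space M \<in> events"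
      by (rule measurable_sets[OF G_meas], rule borel_closed, rule closed_atLeast)
    moreover have "G -` {..<0} \<inter> space M \<in> events"
      by (rule measurable_sets[OF G_meas], rule borel_open, rule open_lessThan)
    ultimately have ev: "{\<omega> \<in> space M. 0 \<le> G \<omega>} \<in> events" "{\<omega> \<in> space M. G \<omega> < 0} \<in> events"
      by (simp_all add: vimage_def Int_def conj_commute)
    have "prob ({\<omega> \<in> space M. 0 \<le> G \<omega>} \<union> {\<omega> \<in> space M. G \<omega> < 0})
        = prob {\<omega> \<in> space M. 0 \<le> G \<omega>} + prob {\<omega> \<in> space M. G \<omega> < 0}"
      by (rule finite_measure_Union) (use ev in auto)
    moreover have "{\<omega> \<in> space M. 0 \<le> G \<omega>} \<union> {\<omega> \<in> space M. G \<omega> < 0} = space M" by auto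
    ultimately show ?thesis using prob_space by simp
  qed
  have "prob {\<omega> \<in> space M. (r \<le> N \<omega> \<and> 0 \<le> G \<omega>) \<or> (N \<omega> \<le> s \<and> G \<omega> < 0)}
      = prob {\<omega> \<in> space M. N \<omega> \<in> {r..} \<and> G \<omega> \<in> {0..}}
        + prob {\<omega> \<in> space M. N \<omega> \<in> {..s} \<and> G \<omega> \<in> {..<0}}"
    by (subst finite_measure_Union[symmetric]) (auto intro!: arg_cong[where f=prob])
  also have "\<dots> = prob {\<omega> \<in> space M. r \<le> N \<omega>} * prob {\<omega> \<in> space M. 0 \<le> G \<omega>}
        + prob {\<omega> \<in> space M. N \<omega> \<le> s} * prob {\<omega> \<in> space M. G \<omega> < 0}"
    using prod_event[OF borel_closed[OF closed_atLeast] borel_closed[OF closed_atLeast], of r 0]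
      prod_event[OF borel_closed[OF closed_atMost] borel_open[OF open_lessThan], of s 0] by simp
  also have "\<dots> \<ge> c * prob {\<omega> \<in> space M. 0 \<le> G \<omega>} + c * prob {\<omega> \<in> space M. G \<omega> < 0}"
    unfolding c_def by (intro add_mono mult_right_mono) auto
  finally show ?thesis using split_G unfolding c_def by (simp add: distrib_left[symmetric])
qed

definition std_normal_measure :: "real measure" where
  "std_normal_measure = density lborel (\<lambda>x. ennreal (std_normal_density x))"

lemma prob_space_std_normal_measure: "prob_space std_normal_measure"
  unfolding std_normal_measure_def using prob_space_normal_density by simp

lemma sets_std_normal_measure [simp]: "sets std_normal_measure = sets borel"
  by (simp add: std_normal_measure_def)

lemma distributed_std_normal_distr:
  assumes "distributed M lborel X std_normal_density"
  shows "distr M borel X = std_normal_measure"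
proof -
  have "distr M borel X = distr M lborel X" by (intro distr_cong) auto
  also have "\<dots> = std_normal_measure"
    using distributed_distr_eq_density[OF assms] unfolding std_normal_measure_def .
  finally show ?thesis .
qed

text \<open>Every nondegenerate interval has positive standard normal probability, since the density
  is bounded below on it.\<close>

lemma std_normal_interval_pos:
  assumes ab: "a < b"
  shows "0 < measure std_normal_measure {a..b}"
proof -
  interpret S: prob_space std_normal_measure by (rule prob_space_std_normal_measure)
  define K where "K = exp (- (\<bar>a\<bar> + \<bar>b\<bar>)\<^sup>2 / 2) / sqrt (2 * pi)"
  have K: "0 < K" unfolding K_def by simp
  have density_ge: "K \<le> std_normal_density x" if "x \<in> {a..b}" for x
  proof -
    have "\<bar>x\<bar> \<le> \<bar>a\<bar> + \<bar>b\<bar>" using that by auto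
    then have "\<bar>x\<bar>\<^sup>2 \<le> (\<bar>a\<bar> + \<bar>b\<bar>)\<^sup>2" by (intro power_mono) auto
    then show ?thesis unfolding K_def std_normal_density_def by (simp add: divide_right_mono)
  qed
  have "ennreal (K * (b - a)) = (\<integral>\<^sup>+x. ennreal K * indicator {a..b} x \<partial>lborel)"
    using K ab by (simp add: nn_integral_cmult_indicator ennreal_mult)
  also have "\<dots> \<le> (\<integral>\<^sup>+x. ennreal (std_normal_density x) * indicator {a..b} x \<partial>lborel)"
    by (intro nn_integral_mono) (auto simp: indicator_def ennreal_leI density_ge)
  also have "\<dots> = emeasure std_normal_measure {a..b}"
    unfolding std_normal_measure_def by (subst emeasure_density) auto
  finally have "ennreal (K * (b - a)) \<le> emeasure std_normal_measure {a..b}" .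
  moreover have "0 < ennreal (K * (b - a))" using K ab by simp
  ultimately show ?thesis by (simp add: S.emeasure_eq_measure)
qed

lemma real_distribution_std_normal_sq: "real_distribution (distr std_normal_measure borel (\<lambda>x. x\<^sup>2))"
proof -
  interpret prob_space std_normal_measure by (rule prob_space_std_normal_measure)
  have "(\<lambda>x::real. x\<^sup>2) \<in> borel_measurable std_normal_measure"
    unfolding measurable_cong_sets[OF sets_std_normal_measure refl] by simp
  then show ?thesis by (intro real_distribution_distr)
qed

section \<open>Brownian motion: Riemann sums of the squared path\<close>

locale brownian =
  fixes Q :: "'b measure" and B :: "real \<Rightarrow> 'b \<Rightarrow> real"
  assumes BM: "brownian_motion Q B"
begin

lemma prob_space_Q: "prob_space Q" using BM unfolding brownian_motion_def by blast

sublocale prob_space Q by (rule prob_space_Q)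

lemma B_meas: "0 \<le> t \<Longrightarrow> B t \<in> borel_measurable Q"
  using BM unfolding brownian_motion_def by blast

lemma B_zero: "\<omega> \<in> space Q \<Longrightarrow> B 0 \<omega> = 0"
  using BM unfolding brownian_motion_def by blast

lemma B_cont: "\<omega> \<in> space Q \<Longrightarrow> continuous_on {0..} (\<lambda>t. B t \<omega>)"
  using BM unfolding brownian_motion_def by blast

lemma B_incr_law: "0 \<le> s \<Longrightarrow> s < t \<Longrightarrow>
   distributed Q lborel (\<lambda>\<omega>. B t \<omega> - B s \<omega>) (normal_density 0 (sqrt (t - s)))"
  using BM unfolding brownian_motion_def by blast

lemma B_incr_indep: "0 \<le> tt 0 \<Longrightarrow> strict_mono tt \<Longrightarrow>
   indep_vars (\<lambda>_. borel) (\<lambda>i \<omega>. B (tt (Suc i)) \<omega> - B (tt i) \<omega>) {..<n}"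
  using BM unfolding brownian_motion_def by blast

lemma B_sq_moment:
  assumes t: "0 < t"
  shows "integrable Q (\<lambda>\<omega>. (B t \<omega>)\<^sup>2)" "(\<integral>\<omega>. (B t \<omega>)\<^sup>2 \<partial>Q) = t"
proof -
  have D: "distributed Q lborel (\<lambda>\<omega>. B t \<omega> - B 0 \<omega>) (normal_density 0 (sqrt t))"
    using B_incr_law[of 0 t] t by simp
  have eq: "\<And>\<omega>. \<omega> \<in> space Q \<Longrightarrow> (B t \<omega> - B 0 \<omega>)\<^sup>2 = (B t \<omega>)\<^sup>2" using B_zero by simp
  have "integrable lborel (\<lambda>x. normal_density 0 (sqrt t) x * x\<^sup>2)"
    using integrable_normal_moment[where \<mu>=0 and \<sigma>="sqrt t" and k=2] t by simp
  then have "integrable Q (\<lambda>\<omega>. (B t \<omega> - B 0 \<omega>)\<^sup>2)"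
    using distributed_integrable[OF D, of "\<lambda>x. x\<^sup>2"] by simp
  moreover have "integrable Q (\<lambda>\<omega>. (B t \<omega> - B 0 \<omega>)\<^sup>2) \<longleftrightarrow> integrable Q (\<lambda>\<omega>. (B t \<omega>)\<^sup>2)"
    by (rule Bochner_Integration.integrable_cong) (auto simp: eq)
  ultimately show "integrable Q (\<lambda>\<omega>. (B t \<omega>)\<^sup>2)" by simp
  have "(\<integral>x. normal_density 0 (sqrt t) x * x\<^sup>2 \<partial>lborel) = t"
    using integral_normal_moment_even[where \<mu>=0 and \<sigma>="sqrt t" and k=1] t by simp
  then have "(\<integral>\<omega>. (B t \<omega> - B 0 \<omega>)\<^sup>2 \<partial>Q) = t"
    using distributed_integral[OF D, of "\<lambda>x. x\<^sup>2"] by simp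
  then show "(\<integral>\<omega>. (B t \<omega>)\<^sup>2 \<partial>Q) = t"
    using eq by (simp cong: Bochner_Integration.integral_cong)
qed

definition riemann_sq :: "nat \<Rightarrow> 'b \<Rightarrow> real" where
  "riemann_sq L \<omega> = (\<Sum>i<L. (B (real (Suc i) / real L) \<omega>)\<^sup>2) / real L"

definition int_sq :: "'b \<Rightarrow> real" where
  "int_sq \<omega> = (LBINT t=0..1. (B t \<omega>)\<^sup>2)"

lemma riemann_sq_meas: "riemann_sq L \<in> borel_measurable Q"
  unfolding riemann_sq_def
  by (intro borel_measurable_divide borel_measurable_sum borel_measurable_power B_meas
      borel_measurable_const) simp

lemma riemann_sq_nonneg: "0 \<le> riemann_sq L \<omega>"
  unfolding riemann_sq_def by (intro divide_nonneg_nonneg sum_nonneg) auto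

lemma riemann_sq_conv: "\<omega> \<in> space Q \<Longrightarrow> (\<lambda>L. riemann_sq L \<omega>) \<longlonglongrightarrow> int_sq \<omega>"
proof -
  assume w: "\<omega> \<in> space Q"
  have "continuous_on {0..1} (\<lambda>t. (B t \<omega>)\<^sup>2)"
    by (intro continuous_on_power continuous_on_subset[OF B_cont[OF w]]) auto
  from riemann_sum_conv_LBINT[OF this] show ?thesis unfolding riemann_sq_def int_sq_def .
qed

lemma int_sq_meas: "int_sq \<in> borel_measurable Q"
  by (rule borel_measurable_LIMSEQ_real[OF riemann_sq_conv riemann_sq_meas])

lemma int_sq_nonneg: "\<omega> \<in> space Q \<Longrightarrow> 0 \<le> int_sq \<omega>"
  by (rule LIMSEQ_le_const[OF riemann_sq_conv]) (auto intro: riemann_sq_nonneg)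

lemma riemann_sq_integral:
  assumes L: "0 < L"
  shows "integrable Q (riemann_sq L)" "(\<integral>\<omega>. riemann_sq L \<omega> \<partial>Q) = (real L + 1) / (2 * real L)"
proof -
  have pos: "\<And>i. 0 < real (Suc i) / real L" using L by simp
  show "integrable Q (riemann_sq L)" unfolding riemann_sq_def
    by (intro integrable_divide Bochner_Integration.integrable_sum B_sq_moment(1) pos)
  have "(\<integral>\<omega>. (\<Sum>i<L. (B (real (Suc i) / real L) \<omega>)\<^sup>2) \<partial>Q)
      = (\<Sum>i<L. \<integral>\<omega>. (B (real (Suc i) / real L) \<omega>)\<^sup>2 \<partial>Q)"
    by (rule Bochner_Integration.integral_sum) (rule B_sq_moment(1)[OF pos])
  then have "(\<integral>\<omega>. riemann_sq L \<omega> \<partial>Q) = (\<Sum>i<L. \<integral>\<omega>. (B (real (Suc i) / real L) \<omega>)\<^sup>2 \<partial>Q) / real L"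
    unfolding riemann_sq_def by simp
  also have "\<dots> = (\<Sum>i<L. real (Suc i) / real L) / real L"
    by (intro arg_cong[where f="\<lambda>x. x / real L"] sum.cong refl B_sq_moment(2)[OF pos])
  also have "\<dots> = (\<Sum>i<L. real (Suc i)) / (real L * real L)"
    by (simp add: sum_divide_distrib)
  also have "(\<Sum>i<L. real (Suc i)) = real L * (real L + 1) / 2"
    by (induction L) (auto simp: field_simps)
  also have "real L * (real L + 1) / 2 / (real L * real L) = (real L + 1) / (2 * real L)"
    using L by (simp add: field_simps)
  finally show "(\<integral>\<omega>. riemann_sq L \<omega> \<partial>Q) = (real L + 1) / (2 * real L)" .
qed

lemma riemann_sq_integral_le: "0 < L \<Longrightarrow> (\<integral>\<omega>. riemann_sq L \<omega> \<partial>Q) \<le> 1"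
  by (simp add: riemann_sq_integral(2) field_simps)

text \<open>By Fatou's lemma, I is integrable with E I \<le> 1.\<close>

lemma int_sq_nn_integral_le: "(\<integral>\<^sup>+\<omega>. ennreal (int_sq \<omega>) \<partial>Q) \<le> 1"
proof -
  have "(\<integral>\<^sup>+\<omega>. ennreal (int_sq \<omega>) \<partial>Q) = (\<integral>\<^sup>+\<omega>. liminf (\<lambda>L. ennreal (riemann_sq L \<omega>)) \<partial>Q)"
  proof (rule nn_integral_cong)
    fix \<omega> assume "\<omega> \<in> space Q"
    then have "(\<lambda>L. ennreal (riemann_sq L \<omega>)) \<longlonglongrightarrow> ennreal (int_sq \<omega>)"
      by (intro tendsto_ennrealI riemann_sq_conv)
    then show "ennreal (int_sq \<omega>) = liminf (\<lambda>L. ennreal (riemann_sq L \<omega>))"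
      by (simp add: lim_imp_Liminf)
  qed
  also have "\<dots> \<le> liminf (\<lambda>L. \<integral>\<^sup>+\<omega>. ennreal (riemann_sq L \<omega>) \<partial>Q)"
    by (rule nn_integral_liminf) (rule measurable_compose[OF riemann_sq_meas], simp)
  also have "\<dots> \<le> 1"
  proof (intro Liminf_le eventually_sequentiallyI[of 1])
    fix L :: nat assume "1 \<le> L"
    then have L: "0 < L" by simp
    have "(\<integral>\<^sup>+\<omega>. ennreal (riemann_sq L \<omega>) \<partial>Q) = ennreal (\<integral>\<omega>. riemann_sq L \<omega> \<partial>Q)"
      by (rule nn_integral_eq_integral[OF riemann_sq_integral(1)[OF L]]) (simp add: riemann_sq_nonneg)
    then show "(\<integral>\<^sup>+\<omega>. ennreal (riemann_sq L \<omega>) \<partial>Q) \<le> 1"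
      using riemann_sq_integral_le[OF L] by simp
  qed simp
  finally show ?thesis .
qed

lemma int_sq_integrable: "integrable Q int_sq"
  using int_sq_nn_integral_le int_sq_nonneg
  by (intro integrableI_nonneg[OF int_sq_meas]) (auto simp: order_le_less_trans)

lemma int_sq_integral_le: "(\<integral>\<omega>. int_sq \<omega> \<partial>Q) \<le> 1"
proof -
  have "ennreal (\<integral>\<omega>. int_sq \<omega> \<partial>Q) = (\<integral>\<^sup>+\<omega>. ennreal (int_sq \<omega>) \<partial>Q)"
    by (rule nn_integral_eq_integral[OF int_sq_integrable, symmetric]) (simp add: int_sq_nonneg)
  then have "ennreal (\<integral>\<omega>. int_sq \<omega> \<partial>Q) \<le> 1" using int_sq_nn_integral_le by simp
  then show ?thesis by (simp add: ennreal_le_1)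
qed

text \<open>Scaled increments sqrt L (B((j+1)/L) - B(j/L)), j < L, are i.i.d. standard normal, and
  their squared partial sums reproduce L^2 R_L (Brownian scaling).\<close>

definition scaled_incr :: "nat \<Rightarrow> nat \<Rightarrow> 'b \<Rightarrow> real" where
  "scaled_incr L j \<omega> = sqrt (real L) * (B (real (Suc j) / real L) \<omega> - B (real j / real L) \<omega>)"

lemma scaled_incr_indep:
  assumes L: "0 < L"
  shows "indep_vars (\<lambda>_. borel) (scaled_incr L) {..<L}"
proof -
  have "strict_mono (\<lambda>i. real i / real L)"
    using L by (intro strict_monoI) (simp add: divide_strict_right_mono)
  then have "indep_vars (\<lambda>_. borel) (\<lambda>i \<omega>. B (real (Suc i) / real L) \<omega> - B (real i / real L) \<omega>) {..<L}"
    using B_incr_indep[of "\<lambda>i. real i / real L"] by simp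
  from indep_vars_compose2[OF this, of "\<lambda>_ x. sqrt (real L) * x" "\<lambda>_. borel"]
  show ?thesis unfolding scaled_incr_def[abs_def] by simp
qed

lemma scaled_incr_law:
  assumes L: "0 < L"
  shows "distr Q borel (scaled_incr L j) = std_normal_measure"
proof -
  have step: "real (Suc j) / real L - real j / real L = 1 / real L"
    by (simp add: diff_divide_distrib[symmetric])
  have "distributed Q lborel (\<lambda>\<omega>. B (real (Suc j) / real L) \<omega> - B (real j / real L) \<omega>)
     (normal_density 0 (sqrt (real (Suc j) / real L - real j / real L)))"
    by (rule B_incr_law) (use L in \<open>auto simp: divide_strict_right_mono\<close>)
  then have d: "distributed Q lborel (\<lambda>\<omega>. B (real (Suc j) / real L) \<omega> - B (real j / real L) \<omega>)
     (normal_density 0 (sqrt (1 / real L)))"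
    unfolding step .
  have "distributed Q lborel (\<lambda>\<omega>. 0 + sqrt (real L) * (B (real (Suc j) / real L) \<omega> - B (real j / real L) \<omega>))
     (normal_density (0 + sqrt (real L) * 0) (\<bar>sqrt (real L)\<bar> * sqrt (1 / real L)))"
    by (rule normal_density_affine[OF d]) (use L in simp_all)
  moreover have "\<bar>sqrt (real L)\<bar> * sqrt (1 / real L) = 1"
    using L by (simp add: real_sqrt_mult[symmetric])
  ultimately have "distributed Q lborel (scaled_incr L j) std_normal_density"
    unfolding scaled_incr_def[abs_def] by simp
  then show ?thesis by (rule distributed_std_normal_distr)
qed

end

section \<open>Squared partial sums over a block\<close>

text \<open>The statistic \<Sum>_(i<L) (z_0 + ... + z_i)^2 of a block of length L; each dyadic block of V
  is of this form.\<close>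

definition sq_psums :: "nat \<Rightarrow> (nat \<Rightarrow> real) \<Rightarrow> real" where
  "sq_psums L z = (\<Sum>i<L. (\<Sum>j\<le>i. z j)\<^sup>2)"

lemma sq_psums_meas: "sq_psums L \<in> borel_measurable (PiM {..<L} (\<lambda>_. borel))"
  unfolding sq_psums_def
proof (intro borel_measurable_sum borel_measurable_power)
  fix i j assume "i \<in> {..<L}" "j \<in> atMost i"
  then have "j \<in> {..<L}" by auto
  then show "(\<lambda>x. x j) \<in> borel_measurable (PiM {..<L} (\<lambda>_. borel))"
    by (rule measurable_component_singleton)
qed

lemma sq_psums_restrict: "sq_psums L (\<lambda>j\<in>{..<L}. z j) = sq_psums L z"
  unfolding sq_psums_def by (intro sum.cong refl arg_cong[where f="\<lambda>x. x\<^sup>2"]) auto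

lemma (in brownian) sq_psums_scaled_incr:
  assumes w: "\<omega> \<in> space Q" and L: "0 < L"
  shows "sq_psums L (\<lambda>j. scaled_incr L j \<omega>) = (real L)\<^sup>2 * riemann_sq L \<omega>"
proof -
  have partial: "(\<Sum>j\<le>i. scaled_incr L j \<omega>) = sqrt (real L) * B (real (Suc i) / real L) \<omega>" for i
  proof -
    have "(\<Sum>j\<le>i. scaled_incr L j \<omega>)
        = sqrt (real L) * (\<Sum>j<Suc i. B (real (Suc j) / real L) \<omega> - B (real j / real L) \<omega>)"
      unfolding scaled_incr_def by (simp add: sum_distrib_left lessThan_Suc_atMost)
    also have "(\<Sum>j<Suc i. B (real (Suc j) / real L) \<omega> - B (real j / real L) \<omega>)
        = B (real (Suc i) / real L) \<omega> - B (real 0 / real L) \<omega>"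
      by (rule sum_lessThan_telescope[of "\<lambda>j. B (real j / real L) \<omega>"])
    finally show ?thesis using B_zero[OF w] by simp
  qed
  have "sq_psums L (\<lambda>j. scaled_incr L j \<omega>) = (\<Sum>i<L. real L * (B (real (Suc i) / real L) \<omega>)\<^sup>2)"
    unfolding sq_psums_def partial by (simp add: power_mult_distrib)
  also have "\<dots> = (real L)\<^sup>2 * riemann_sq L \<omega>"
    unfolding riemann_sq_def using L by (simp add: sum_distrib_left[symmetric] power2_eq_square)
  finally show ?thesis .
qed

section \<open>The block decomposition of V for i.i.d. standard normal variables\<close>

lemma dyadic_block_unique:
  assumes "(2::nat)^p \<le> i" "i < 2^(Suc p)" "2^q \<le> i" "i < 2^(Suc q)"
  shows "p = q"
proof (rule ccontr)
  assume "p \<noteq> q"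
  then consider "Suc p \<le> q" | "Suc q \<le> p" by linarith
  then show False
  proof cases
    case 1 then have "(2::nat)^(Suc p) \<le> 2^q" by (rule power_increasing) simp
    then show False using assms by linarith
  next
    case 2 then have "(2::nat)^(Suc q) \<le> 2^p" by (rule power_increasing) simp
    then show False using assms by linarith
  qed
qed

locale dyadic_gaussian =
  fixes M :: "'a measure" and X :: "nat \<Rightarrow> 'a \<Rightarrow> real" and a :: "nat \<Rightarrow> nat"
  assumes prob_space_M: "prob_space M"
    and X_indep: "prob_space.indep_vars M (\<lambda>_. borel) X {1..}"
    and X_normal: "\<And>i. 1 \<le> i \<Longrightarrow> distributed M lborel (X i) std_normal_density"
    and a_def: "\<And>k. a k = 2 ^ (k - 1)"
begin

sublocale prob_space M by (rule prob_space_M)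

lemma X_meas: "1 \<le> i \<Longrightarrow> X i \<in> borel_measurable M"
  using indep_vars_def2[THEN iffD1, OF X_indep] by simp

lemma X_law: "1 \<le> i \<Longrightarrow> distr M borel (X i) = std_normal_measure"
  by (rule distributed_std_normal_distr[OF X_normal])

lemma Vstat_meas: "Vstat a X n \<in> borel_measurable M"
  unfolding Vstat_def[abs_def] Wsum_def
proof (intro borel_measurable_sum borel_measurable_power)
  fix i j assume i: "i \<in> {1..n}" and j: "j \<in> {tseq a i..i}"
  then have "1 \<le> j" using tseq_ge_1[OF a_def, of i] by auto
  then show "X j \<in> borel_measurable M" by (rule X_meas)
qed

lemma Wsum_dyadic:
  assumes "2^p \<le> i" "i < 2^(Suc p)"
  shows "Wsum a X i \<omega> = (\<Sum>j=2^p..i. X j \<omega>)"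
  unfolding Wsum_def tseq_dyadic[OF a_def assms] ..

definition block_stat :: "nat \<Rightarrow> 'a \<Rightarrow> real" where
  "block_stat p \<omega> = sq_psums (2^p) (\<lambda>j. X (2^p + j) \<omega>)"

lemma block_stat_eq: "(\<Sum>i\<in>{2^p..<2^(Suc p)}. (Wsum a X i \<omega>)\<^sup>2) = block_stat p \<omega>"
proof -
  have "(\<Sum>i\<in>{2^p..<2^(Suc p)}. (Wsum a X i \<omega>)\<^sup>2) = (\<Sum>i<2^p. (Wsum a X (2^p + i) \<omega>)\<^sup>2)"
    by (rule sum.reindex_bij_witness[of _ "\<lambda>i. 2^p + i" "\<lambda>i. i - 2^p"]) auto
  also have "\<dots> = (\<Sum>i<2^p. (\<Sum>j\<le>i. X (2^p + j) \<omega>)\<^sup>2)"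
  proof (rule sum.cong[OF refl])
    fix i assume i: "i \<in> {..<(2::nat)^p}"
    have "Wsum a X (2^p + i) \<omega> = (\<Sum>j=2^p..2^p+i. X j \<omega>)"
      by (rule Wsum_dyadic) (use i in auto)
    also have "\<dots> = (\<Sum>j\<le>i. X (2^p + j) \<omega>)"
      by (rule sum.reindex_bij_witness[of _ "\<lambda>j. 2^p + j" "\<lambda>j. j - 2^p"]) auto
    finally show "(Wsum a X (2^p + i) \<omega>)\<^sup>2 = (\<Sum>j\<le>i. X (2^p + j) \<omega>)\<^sup>2" by simp
  qed
  finally show ?thesis unfolding block_stat_def sq_psums_def .
qed

lemma Vstat_pow2_decomp: "Vstat a X (2^m) \<omega> = (\<Sum>p<m. block_stat p \<omega>) + (X (2^m) \<omega>)\<^sup>2"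
proof -
  have below: "(\<Sum>i\<in>{1..<2^n}. (Wsum a X i \<omega>)\<^sup>2) = (\<Sum>p<n. block_stat p \<omega>)" for n
  proof (induction n)
    case (Suc n)
    have "(\<Sum>i\<in>{1..<2^(Suc n)}. (Wsum a X i \<omega>)\<^sup>2) =
        (\<Sum>i\<in>{1..<2^n}. (Wsum a X i \<omega>)\<^sup>2) + (\<Sum>i\<in>{2^n..<2^(Suc n)}. (Wsum a X i \<omega>)\<^sup>2)"
      by (rule sum.atLeastLessThan_concat[symmetric]) auto
    then show ?case using Suc block_stat_eq by simp
  qed simp
  have "Vstat a X (2^m) \<omega> = (\<Sum>i\<in>{1..<2^m}. (Wsum a X i \<omega>)\<^sup>2) + (Wsum a X (2^m) \<omega>)\<^sup>2"
    unfolding Vstat_def by (simp add: atLeastLessThanSuc_atLeastAtMost[symmetric] sum.atLeastLessThan_Suc)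
  moreover have "Wsum a X (2^m) \<omega> = X (2^m) \<omega>"
    using Wsum_dyadic[of m "2^m" \<omega>] by simp
  ultimately show ?thesis unfolding below by simp
qed

text \<open>The summands of this decomposition, indexed by p \<le> m, depend on disjoint sets of
  variables and are therefore independent.\<close>

definition block_var :: "nat \<Rightarrow> nat \<Rightarrow> 'a \<Rightarrow> real" where
  "block_var m p = (if p < m then block_stat p else (\<lambda>\<omega>. (X (2^m) \<omega>)\<^sup>2))"

definition block_index :: "nat \<Rightarrow> nat \<Rightarrow> nat set" where
  "block_index m p = (if p < m then {2^p..<2^(Suc p)} else {2^m})"

definition block_fun :: "nat \<Rightarrow> nat \<Rightarrow> (nat \<Rightarrow> real) \<Rightarrow> real" where
  "block_fun m p y = (if p < m then sq_psums (2^p) (\<lambda>j. y (2^p + j)) else (y (2^m))\<^sup>2)"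

lemma block_index_sub: "p \<le> m \<Longrightarrow> block_index m p \<subseteq> {2^p..<2^(Suc p)}"
  unfolding block_index_def by auto

lemma block_fun_meas: "block_fun m p \<in> borel_measurable (PiM (block_index m p) (\<lambda>_. borel))"
proof (cases "p < m")
  case True
  have "(\<lambda>y. sq_psums (2^p) (\<lambda>j. y (2^p + j))) \<in> borel_measurable (PiM (block_index m p) (\<lambda>_. borel))"
    unfolding sq_psums_def
  proof (intro borel_measurable_sum borel_measurable_power)
    fix i j assume "i \<in> {..<(2::nat)^p}" "j \<in> atMost i"
    then have "2^p + j \<in> block_index m p" using True by (auto simp: block_index_def)
    then show "(\<lambda>y. y (2^p + j)) \<in> borel_measurable (PiM (block_index m p) (\<lambda>_. borel))"
      by (rule measurable_component_singleton)
  qed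
  then show ?thesis using True by (simp add: block_fun_def[abs_def])
next
  case False
  have "2^m \<in> block_index m p" using False by (simp add: block_index_def)
  then have "(\<lambda>y. y (2^m)) \<in> borel_measurable (PiM (block_index m p) (\<lambda>_. borel))"
    by (rule measurable_component_singleton)
  then have "(\<lambda>y::nat \<Rightarrow> real. (y (2^m))\<^sup>2) \<in> borel_measurable (PiM (block_index m p) (\<lambda>_. borel))"
    by (rule borel_measurable_power)
  then show ?thesis using False by (simp add: block_fun_def[abs_def])
qed

lemma block_var_restrict: "block_fun m p (restrict (\<lambda>i. X i \<omega>) (block_index m p)) = block_var m p \<omega>"
  by (auto simp: block_fun_def block_var_def block_stat_def block_index_def sq_psums_def
      intro!: sum.cong arg_cong[where f="\<lambda>x. x\<^sup>2"])

lemma block_var_indep: "indep_vars (\<lambda>_. borel) (block_var m) {..m}"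
proof -
  have pos: "block_index m p \<subseteq> {1..}" if "p \<in> {..m}" for p
    using block_index_sub[of p m] that one_le_power[of "2::nat" p] by auto
  have "disjoint_family_on (block_index m) {..m}"
    unfolding disjoint_family_on_def
  proof (intro ballI impI)
    fix p q assume pq: "p \<in> {..m}" "q \<in> {..m}" "p \<noteq> q"
    show "block_index m p \<inter> block_index m q = {}"
    proof (rule ccontr)
      assume "block_index m p \<inter> block_index m q \<noteq> {}"
      then obtain i where "i \<in> block_index m p" "i \<in> block_index m q" by blast
      then have "i \<in> {2^p..<2^(Suc p)}" "i \<in> {2^q..<2^(Suc q)}"
        using block_index_sub pq by blast+
      then have "p = q" using dyadic_block_unique by auto
      with pq show False by simp
    qed
  qed
  from indep_vars_restrict[OF X_indep pos this]
  have "indep_vars (\<lambda>p. PiM (block_index m p) (\<lambda>_. borel))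
      (\<lambda>p \<omega>. restrict (\<lambda>i. X i \<omega>) (block_index m p)) {..m}" .
  from indep_vars_compose2[OF this block_fun_meas]
  show ?thesis unfolding block_var_restrict .
qed

lemma char_Vstat_pow2:
  "char (distr M borel (\<lambda>\<omega>. Vstat a X (2^m) \<omega> / c)) t =
    (\<Prod>p<m. char (distr M borel (block_stat p)) (t / c)) * char (distr M borel (\<lambda>\<omega>. (X (2^m) \<omega>)\<^sup>2)) (t / c)"
proof -
  have sum_meas: "(\<lambda>\<omega>. \<Sum>p\<in>{..m}. block_var m p \<omega>) \<in> borel_measurable M"
    using block_var_indep[of m] by (intro borel_measurable_sum) (auto simp: indep_vars_def2)
  have "distr M borel (\<lambda>\<omega>. Vstat a X (2^m) \<omega> / c) = distr M borel (\<lambda>\<omega>. (1/c) * (\<Sum>p\<in>{..m}. block_var m p \<omega>))"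
    by (intro distr_cong refl)
      (simp add: Vstat_pow2_decomp block_var_def atMost_Suc lessThan_Suc_atMost[symmetric])
  then have "char (distr M borel (\<lambda>\<omega>. Vstat a X (2^m) \<omega> / c)) t
      = char (distr M borel (\<lambda>\<omega>. \<Sum>p\<in>{..m}. block_var m p \<omega>)) (t * (1/c))"
    using char_distr_scale[OF sum_meas, of "1/c" t] by simp
  also have "\<dots> = (\<Prod>p\<in>{..m}. char (distr M borel (block_var m p)) (t * (1/c)))"
    by (rule char_distr_sum[OF block_var_indep])
  also have "\<dots> = (\<Prod>p<m. char (distr M borel (block_stat p)) (t / c))
      * char (distr M borel (\<lambda>\<omega>. (X (2^m) \<omega>)\<^sup>2)) (t / c)"
    by (simp add: lessThan_Suc_atMost[symmetric] block_var_def)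
  finally show ?thesis .
qed

lemma char_X_sq_vanishing:
  assumes c: "c \<longlonglongrightarrow> 0"
  shows "(\<lambda>m. char (distr M borel (\<lambda>\<omega>. (X (2^m) \<omega>)\<^sup>2)) (c m)) \<longlonglongrightarrow> 1"
proof -
  interpret N: real_distribution "distr std_normal_measure borel (\<lambda>x. x\<^sup>2)"
    by (rule real_distribution_std_normal_sq)
  have law: "distr M borel (\<lambda>\<omega>. (X i \<omega>)\<^sup>2) = distr std_normal_measure borel (\<lambda>x. x\<^sup>2)" if "1 \<le> i" for i
    using distr_distr[of "\<lambda>x::real. x\<^sup>2" borel borel "X i" M] X_meas[OF that] X_law[OF that]
    by (simp add: comp_def)
  have "(\<lambda>m. char (distr std_normal_measure borel (\<lambda>x. x\<^sup>2)) (c m))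
      \<longlonglongrightarrow> char (distr std_normal_measure borel (\<lambda>x. x\<^sup>2)) 0"
    by (rule isCont_tendsto_compose[OF N.isCont_char c])
  then show ?thesis by (simp add: law N.char_zero)
qed

end

text \<open>Brownian scaling identifies the law of each block: S_p has the law of L^2 R_L, L = 2^p.\<close>

lemma block_stat_law:
  assumes G: "dyadic_gaussian M X a" and W: "brownian Q B"
  shows "distr M borel (dyadic_gaussian.block_stat X p)
    = distr Q borel (\<lambda>\<omega>. (real (2^p))\<^sup>2 * brownian.riemann_sq B (2^p) \<omega>)"
proof -
  interpret dyadic_gaussian M X a by (rule G)
  interpret W: brownian Q B by (rule W)
  define L :: nat where "L = 2^p"
  have L: "0 < L" by (simp add: L_def)
  have indep_block: "indep_vars (\<lambda>_. borel) (\<lambda>j. X (L + j)) {..<L}"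
  proof -
    have "(\<lambda>j. L + j) ` {..<L} \<subseteq> {1..}" using L by auto
    then show ?thesis
      using indep_vars_reindex[OF X_indep, of "\<lambda>j. L + j" "{..<L}"] by (auto simp: inj_on_def)
  qed
  have "distr M borel (\<lambda>\<omega>. sq_psums L (\<lambda>j\<in>{..<L}. X (L + j) \<omega>))
      = distr Q borel (\<lambda>\<omega>. sq_psums L (\<lambda>j\<in>{..<L}. W.scaled_incr L j \<omega>))"
  proof (rule distr_fun_of_iid_eq[OF prob_space_M W.prob_space_Q _ indep_block W.scaled_incr_indep[OF L]])
    show "\<And>j. j \<in> {..<L} \<Longrightarrow> distr M borel (X (L + j)) = std_normal_measure"
      using L by (intro X_law) simp
  qed (use L W.scaled_incr_law[OF L] sq_psums_meas in auto)
  also have "\<dots> = distr Q borel (\<lambda>\<omega>. (real L)\<^sup>2 * W.riemann_sq L \<omega>)"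
    by (intro distr_cong refl) (simp add: sq_psums_restrict W.sq_psums_scaled_incr[OF _ L])
  finally show ?thesis unfolding block_stat_def[abs_def] L_def sq_psums_restrict by simp
qed

lemma char_block_stat:
  assumes G: "dyadic_gaussian M X a" and W: "brownian Q B"
  shows "char (distr M borel (dyadic_gaussian.block_stat X p)) s
    = (CLINT \<omega>|Q. iexp (s * ((real (2^p))\<^sup>2 * brownian.riemann_sq B (2^p) \<omega>)))"
proof -
  interpret W: brownian Q B by (rule W)
  show ?thesis unfolding block_stat_law[OF G W]
    by (rule char_distr_integral) (intro borel_measurable_times borel_measurable_const W.riemann_sq_meas)
qed

section \<open>The limit variable\<close>

text \<open>The series (3/2) \<Sum>_j \<xi>_j / 4^j converges almost surely (each \<xi>_j is a copy of
  \<integral>_0^1 B^2, nonnegative with mean at most 1), and its characteristic function is the limit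
  of the finite products of E exp(i t (3/2) 4^(-j) \<integral>_0^1 B^2).\<close>

lemma limit_series_char:
  fixes P :: "'c measure" and \<xi> :: "nat \<Rightarrow> 'c \<Rightarrow> real"
  assumes W: "brownian Q B" and P: "prob_space P"
    and xi_indep: "prob_space.indep_vars P (\<lambda>_. borel) \<xi> UNIV"
    and xi_law: "\<And>j. distr P borel (\<xi> j) = distr Q borel (\<lambda>\<omega>. LBINT t=0..1. (B t \<omega>)\<^sup>2)"
  shows "real_distribution (distr P borel (\<lambda>\<omega>. 3 / 2 * (\<Sum>j. \<xi> j \<omega> / 4 ^ j)))"
    and "(\<lambda>J. \<Prod>j<J. CLINT \<omega>|Q. iexp (t * (3 / 2) * (1 / 4) ^ j * brownian.int_sq B \<omega>))
       \<longlonglongrightarrow> char (distr P borel (\<lambda>\<omega>. 3 / 2 * (\<Sum>j. \<xi> j \<omega> / 4 ^ j))) t"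
proof -
  interpret W: brownian Q B by (rule W)
  interpret P: prob_space P by (rule P)
  have law: "distr P borel (\<xi> j) = distr Q borel W.int_sq" for j
    unfolding xi_law W.int_sq_def[abs_def] ..
  have xi_meas[measurable]: "\<xi> j \<in> borel_measurable P" for j
    using P.indep_vars_def2[THEN iffD1, OF xi_indep] by simp
  have int_sq_meas[measurable]: "W.int_sq \<in> borel_measurable Q" by (rule W.int_sq_meas)
  show "real_distribution (distr P borel (\<lambda>\<omega>. 3 / 2 * (\<Sum>j. \<xi> j \<omega> / 4 ^ j)))"
    by (intro P.real_distribution_distr) measurable
  have nonneg: "AE \<omega> in P. 0 \<le> \<xi> j \<omega>" for j
  proof -
    have "AE x in distr Q borel W.int_sq. 0 \<le> x"
      by (subst AE_distr_iff) (auto intro!: AE_I2 W.int_sq_nonneg)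
    then have "AE x in distr P borel (\<xi> j). 0 \<le> x" unfolding law .
    then show ?thesis by (subst (asm) AE_distr_iff) auto
  qed
  have moment: "(\<integral>\<^sup>+\<omega>. ennreal (\<xi> j \<omega>) \<partial>P) \<le> 1" for j
  proof -
    have "(\<integral>\<^sup>+\<omega>. ennreal (\<xi> j \<omega>) \<partial>P) = (\<integral>\<^sup>+x. ennreal x \<partial>distr P borel (\<xi> j))"
      by (subst nn_integral_distr) auto
    also have "\<dots> = (\<integral>\<^sup>+\<omega>. ennreal (W.int_sq \<omega>) \<partial>Q)"
      unfolding law by (subst nn_integral_distr) auto
    finally show ?thesis using W.int_sq_nn_integral_le by simp
  qed
  have "AE \<omega> in P. summable (\<lambda>j. (1 / 4) ^ j * \<xi> j \<omega>)"
    by (rule P.AE_summable_weighted_series[OF xi_meas nonneg moment]) auto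
  from P.char_weighted_series[OF xi_indep this, of t "3 / 2"]
  have "(\<lambda>J. \<Prod>j<J. char (distr P borel (\<xi> j)) (t * (3 / 2) * (1 / 4) ^ j))
       \<longlonglongrightarrow> char (distr P borel (\<lambda>\<omega>. 3 / 2 * (\<Sum>j. (1 / 4) ^ j * \<xi> j \<omega>))) t" .
  moreover have "char (distr P borel (\<xi> j)) s = (CLINT \<omega>|Q. iexp (s * W.int_sq \<omega>))" for j s
    unfolding law by (rule char_distr_integral[OF int_sq_meas])
  moreover have "(\<lambda>j. (1 / 4) ^ j * \<xi> j \<omega>) = (\<lambda>j. \<xi> j \<omega> / 4 ^ j)" for \<omega>
    by (simp add: power_divide)
  ultimately show "(\<lambda>J. \<Prod>j<J. CLINT \<omega>|Q. iexp (t * (3 / 2) * (1 / 4) ^ j * W.int_sq \<omega>))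
       \<longlonglongrightarrow> char (distr P borel (\<lambda>\<omega>. 3 / 2 * (\<Sum>j. \<xi> j \<omega> / 4 ^ j))) t"
    by simp
qed

section \<open>Weak convergence of V_(2^m) / v_(2^m)\<close>

text \<open>With \<rho>_m = 4^m / (6 v_(2^m)) \<longlonglongrightarrow> 1, the coefficient of the block of length
  2^(m-1-j) in the characteristic function is t (3/2) 4^(-j) \<rho>_m.\<close>

definition rho :: "nat \<Rightarrow> real" where
  "rho m = 1 / (1 + 3 * (1/2)^m + 2 * (1/4)^m)"

lemma rho_lim: "rho \<longlonglongrightarrow> 1"
proof -
  have "(\<lambda>m. 1 / (1 + 3 * (1/2::real)^m + 2 * (1/4)^m)) \<longlonglongrightarrow> 1 / (1 + 3 * 0 + 2 * 0)"
    by (intro tendsto_intros LIMSEQ_power_zero) auto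
  then show ?thesis unfolding rho_def[abs_def] by simp
qed

lemma rho_bounds: "0 < rho m" "rho m \<le> 1"
proof -
  have "0 \<le> (1/2::real)^m" "0 \<le> (1/4::real)^m" by simp_all
  then have D: "1 \<le> 1 + 3 * (1/2::real)^m + 2 * (1/4)^m" by linarith
  then have "0 < 1 + 3 * (1/2::real)^m + 2 * (1/4)^m" by linarith
  then show "0 < rho m" unfolding rho_def by simp
  have "\<And>x::real. 1 \<le> x \<Longrightarrow> 1 / x \<le> 1" by simp
  from this[OF D] show "rho m \<le> 1" unfolding rho_def .
qed

lemma vnorm_pow2_rho:
  assumes a_def: "\<And>k. a k = 2 ^ (k - 1)"
  shows "real (vnorm a (2^m)) = 4^m / (6 * rho m)"
proof -
  have four: "(4::real)^m = 2^m * 2^m" by (simp flip: power_mult_distrib)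
  have "(0::real) < 2^m" by simp
  then show ?thesis unfolding vnorm_pow2[OF a_def] rho_def four power_divide
    by (simp add: field_simps)
qed

lemma block_coeff_eq:
  assumes a_def: "\<And>k. a k = 2 ^ (k - 1)" and j: "j < m"
  shows "t / real (vnorm a (2^m)) * (real (2^(m - Suc j)))\<^sup>2 = t * (3 / 2) * (1 / 4) ^ j * rho m"
proof -
  have "(real (2^(m - Suc j)))\<^sup>2 = 4 ^ (m - Suc j)"
    by (simp add: power2_eq_square flip: power_mult_distrib)
  moreover have "(4::real) ^ m = 4 ^ (m - Suc j + Suc j)" using j by simp
  ultimately have "(real (2^(m - Suc j)))\<^sup>2 * (4 * 4^j) = 4 ^ m" by (simp add: power_add)
  then show ?thesis
    unfolding vnorm_pow2_rho[OF a_def] using rho_bounds(1)[of m]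
    by (simp add: field_simps power_divide)
qed

lemma inv_vnorm_pow2_lim:
  assumes a_def: "\<And>k. a k = 2 ^ (k - 1)"
  shows "(\<lambda>m. t / real (vnorm a (2^m))) \<longlonglongrightarrow> 0"
proof -
  have "t / real (vnorm a (2^m)) = 6 * t * rho m * (1/4)^m" for m
    unfolding vnorm_pow2_rho[OF a_def] by (simp add: power_divide)
  moreover have "(\<lambda>m. 6 * t * rho m * (1/4::real)^m) \<longlonglongrightarrow> 6 * t * 1 * 0"
    by (intro tendsto_intros rho_lim LIMSEQ_power_zero) auto
  ultimately show ?thesis by simp
qed

text \<open>The block products of expectations E exp(i \<alpha>_(m,j) R_(2^(m-1-j))) approach the
  products of E exp(i t (3/2) 4^(-j) I), by the Tannery argument with the majorant
  |\<alpha>| R + |\<beta>| I of mean at most 2 |\<beta>_j|.\<close>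

lemma (in brownian) block_char_prod_limit:
  assumes a_def: "\<And>k. a k = 2 ^ (k - 1)"
  shows "(\<lambda>m. (\<Prod>j<m. CLINT \<omega>|Q. iexp (t / real (vnorm a (2^m)) * (real (2^(m - Suc j)))\<^sup>2
                                          * riemann_sq (2^(m - Suc j)) \<omega>))
           - (\<Prod>j<m. CLINT \<omega>|Q. iexp (t * (3 / 2) * (1 / 4) ^ j * int_sq \<omega>))) \<longlonglongrightarrow> 0"
proof -
  define \<alpha> where "\<alpha> m j = t / real (vnorm a (2^m)) * (real (2^(m - Suc j)))\<^sup>2" for m j
  define \<beta> where "\<beta> j = t * (3 / 2) * (1 / 4 :: real) ^ j" for j
  define L where "L m j = (2::nat) ^ (m - Suc j)" for m j
  have coeff: "\<alpha> m j = \<beta> j * rho m" if "j < m" for m j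
    unfolding \<alpha>_def \<beta>_def by (rule block_coeff_eq[OF a_def that])
  have coeff_le: "\<bar>\<alpha> m j\<bar> \<le> \<bar>\<beta> j\<bar>" if "j < m" for m j
    using rho_bounds[of m] by (simp add: coeff[OF that] abs_mult mult_left_le)
  have L_lim: "filterlim (\<lambda>m. L m j) at_top sequentially" for j
    unfolding L_def
    by (rule filterlim_at_top_mono[OF filterlim_minus_const_nat_at_top[of "Suc j"]])
      (intro always_eventually allI less_imp_le less_exp)
  have "(\<lambda>m. (\<Prod>j<m. CLINT \<omega>|Q. iexp (\<alpha> m j * riemann_sq (L m j) \<omega>))
           - (\<Prod>j<m. CLINT \<omega>|Q. iexp (\<beta> j * int_sq \<omega>))) \<longlonglongrightarrow> 0"
  proof (rule tendsto_char_prod[where b="\<lambda>j. 2 * \<bar>\<beta> j\<bar>"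
        and d="\<lambda>m j \<omega>. \<bar>\<alpha> m j\<bar> * riemann_sq (L m j) \<omega> + \<bar>\<beta> j\<bar> * int_sq \<omega>"])
    fix j \<omega> assume \<omega>: "\<omega> \<in> space Q"
    have "(\<lambda>m. \<alpha> m j) \<longlonglongrightarrow> \<beta> j * 1"
      by (rule Lim_transform_eventually[OF tendsto_mult[OF tendsto_const rho_lim]])
        (intro eventually_sequentiallyI[of "Suc j"], simp add: coeff)
    moreover have "(\<lambda>m. riemann_sq (L m j) \<omega>) \<longlonglongrightarrow> int_sq \<omega>"
      using filterlim_compose[OF riemann_sq_conv[OF \<omega>] L_lim] by (simp add: o_def)
    ultimately show "(\<lambda>m. \<alpha> m j * riemann_sq (L m j) \<omega>) \<longlonglongrightarrow> \<beta> j * int_sq \<omega>"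
      by (auto intro: tendsto_mult)
  next
    fix m j :: nat and \<omega> assume "j < m" "\<omega> \<in> space Q"
    then show "\<bar>\<alpha> m j * riemann_sq (L m j) \<omega> - \<beta> j * int_sq \<omega>\<bar>
        \<le> \<bar>\<alpha> m j\<bar> * riemann_sq (L m j) \<omega> + \<bar>\<beta> j\<bar> * int_sq \<omega>"
      using riemann_sq_nonneg[of "L m j" \<omega>] int_sq_nonneg
      by (simp add: abs_mult order_trans[OF abs_triangle_ineq4])
  next
    fix m j :: nat assume j: "j < m"
    have L: "0 < L m j" by (simp add: L_def)
    show "integrable Q (\<lambda>\<omega>. \<bar>\<alpha> m j\<bar> * riemann_sq (L m j) \<omega> + \<bar>\<beta> j\<bar> * int_sq \<omega>)"
      by (intro Bochner_Integration.integrable_add integrable_mult_right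
          riemann_sq_integral(1)[OF L] int_sq_integrable)
    have "(\<integral>\<omega>. \<bar>\<alpha> m j\<bar> * riemann_sq (L m j) \<omega> + \<bar>\<beta> j\<bar> * int_sq \<omega> \<partial>Q)
        = \<bar>\<alpha> m j\<bar> * (\<integral>\<omega>. riemann_sq (L m j) \<omega> \<partial>Q) + \<bar>\<beta> j\<bar> * (\<integral>\<omega>. int_sq \<omega> \<partial>Q)"
      by (simp add: integrable_mult_right riemann_sq_integral(1)[OF L] int_sq_integrable)
    also have "\<dots> \<le> \<bar>\<beta> j\<bar> * 1 + \<bar>\<beta> j\<bar> * 1"
      by (intro add_mono mult_mono coeff_le[OF j] riemann_sq_integral_le[OF L] int_sq_integral_le)
        (auto intro!: integral_nonneg_AE riemann_sq_nonneg int_sq_nonneg)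
    finally show "(\<integral>\<omega>. \<bar>\<alpha> m j\<bar> * riemann_sq (L m j) \<omega> + \<bar>\<beta> j\<bar> * int_sq \<omega> \<partial>Q) \<le> 2 * \<bar>\<beta> j\<bar>"
      by simp
  next
    show "summable (\<lambda>j. 2 * \<bar>\<beta> j\<bar>)"
      unfolding \<beta>_def by (simp add: abs_mult summable_geometric)
  qed (intro borel_measurable_times borel_measurable_const riemann_sq_meas int_sq_meas)+
  then show ?thesis unfolding \<alpha>_def \<beta>_def L_def .
qed

lemma weak_conv_Vstat_pow2:
  fixes P :: "'c measure" and \<xi> :: "nat \<Rightarrow> 'c \<Rightarrow> real"
  assumes G: "dyadic_gaussian M X a" and W: "brownian Q B" and P: "prob_space P"
    and xi_indep: "prob_space.indep_vars P (\<lambda>_. borel) \<xi> UNIV"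
    and xi_law: "\<And>j. distr P borel (\<xi> j) = distr Q borel (\<lambda>\<omega>. LBINT t=0..1. (B t \<omega>)\<^sup>2)"
  shows "weak_conv_m (\<lambda>m. distr M borel (\<lambda>\<omega>. Vstat a X (2 ^ m) \<omega> / real (vnorm a (2 ^ m))))
        (distr P borel (\<lambda>\<omega>. 3 / 2 * (\<Sum>j. \<xi> j \<omega> / 4 ^ j)))"
proof (rule levy_continuity)
  interpret dyadic_gaussian M X a by (rule G)
  interpret W: brownian Q B by (rule W)
  show "real_distribution (distr M borel (\<lambda>\<omega>. Vstat a X (2 ^ m) \<omega> / real (vnorm a (2 ^ m))))" for m
    using Vstat_meas by (intro real_distribution_distr borel_measurable_divide) auto
  show "real_distribution (distr P borel (\<lambda>\<omega>. 3 / 2 * (\<Sum>j. \<xi> j \<omega> / 4 ^ j)))"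
    by (rule limit_series_char(1)[OF W P xi_indep xi_law])
  fix t :: real
  define v where "v m = real (vnorm a (2 ^ m))" for m
  define A where "A m = (\<Prod>j<m. CLINT \<omega>|Q. iexp (t / v m * (real (2^(m - Suc j)))\<^sup>2
                                                * W.riemann_sq (2^(m - Suc j)) \<omega>))" for m
  define C where "C m = (\<Prod>j<m. CLINT \<omega>|Q. iexp (t * (3 / 2) * (1 / 4) ^ j * W.int_sq \<omega>))" for m
  define e where "e m = char (distr M borel (\<lambda>\<omega>. (X (2^m) \<omega>)\<^sup>2)) (t / v m)" for m
  have char_eq: "char (distr M borel (\<lambda>\<omega>. Vstat a X (2 ^ m) \<omega> / v m)) t = A m * e m" for m
  proof -
    have "(\<Prod>p<m. char (distr M borel (block_stat p)) (t / v m))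
        = (\<Prod>p<m. CLINT \<omega>|Q. iexp (t / v m * ((real (2^p))\<^sup>2 * W.riemann_sq (2^p) \<omega>)))"
      by (intro prod.cong refl char_block_stat[OF G W])
    also have "\<dots> = A m" unfolding A_def
      by (rule prod.reindex_bij_witness[of _ "\<lambda>p. m - Suc p" "\<lambda>j. m - Suc j"]) (auto simp: mult.assoc)
    finally show ?thesis unfolding e_def by (simp add: char_Vstat_pow2)
  qed
  have "(\<lambda>m. A m - C m) \<longlonglongrightarrow> 0"
    unfolding A_def C_def v_def by (rule W.block_char_prod_limit[OF a_def])
  moreover have "C \<longlonglongrightarrow> char (distr P borel (\<lambda>\<omega>. 3 / 2 * (\<Sum>j. \<xi> j \<omega> / 4 ^ j))) t"
    unfolding C_def by (rule limit_series_char(2)[OF W P xi_indep xi_law])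
  moreover have "e \<longlonglongrightarrow> 1"
    unfolding e_def v_def by (rule char_X_sq_vanishing[OF inv_vnorm_pow2_lim[OF a_def]])
  ultimately have "(\<lambda>m. ((A m - C m) + C m) * e m)
      \<longlonglongrightarrow> (0 + char (distr P borel (\<lambda>\<omega>. 3 / 2 * (\<Sum>j. \<xi> j \<omega> / 4 ^ j))) t) * 1"
    by (intro tendsto_intros)
  then show "(\<lambda>m. char (distr M borel (\<lambda>\<omega>. Vstat a X (2 ^ m) \<omega> / real (vnorm a (2 ^ m)))) t)
      \<longlonglongrightarrow> char (distr P borel (\<lambda>\<omega>. 3 / 2 * (\<Sum>j. \<xi> j \<omega> / 4 ^ j))) t"
    using char_eq unfolding v_def by simp
qed

section \<open>Non-consistency\<close>

context dyadic_gaussian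
begin

text \<open>For H = 2^q consider n = 4H - 1. On the block [2H, 4H) every W_i with i \<ge> 3H equals
  T + (X_(3H) + ... + X_i), where T is the sum over [2H, 3H); G collects the remaining
  partial sums.\<close>

definition mid_sum :: "nat \<Rightarrow> 'a \<Rightarrow> real" where
  "mid_sum q \<omega> = (\<Sum>j\<in>{2 * 2^q..<3 * 2^q}. X j \<omega>)"

definition tail_sum :: "nat \<Rightarrow> 'a \<Rightarrow> real" where
  "tail_sum q \<omega> = (\<Sum>i\<in>{3 * 2^q..<4 * 2^q}. \<Sum>j\<in>{3 * 2^q..i}. X j \<omega>)"

text \<open>Expanding (T + \<dots>)^2 over the last quarter of the block: V_n \<ge> H T^2 + 2 T G.\<close>

lemma Vstat_lower_bound:
  "real (2^q) * (mid_sum q \<omega>)\<^sup>2 + 2 * mid_sum q \<omega> * tail_sum q \<omega> \<le> Vstat a X (4 * 2^q - 1) \<omega>"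
proof -
  define H :: nat where "H = 2^q"
  have H1: "1 \<le> H" by (simp add: H_def)
  have W: "Wsum a X i \<omega> = mid_sum q \<omega> + (\<Sum>j\<in>{3 * H..i}. X j \<omega>)" if i: "i \<in> {3*H..<4*H}" for i
  proof -
    have "Wsum a X i \<omega> = (\<Sum>j=2^(Suc q)..i. X j \<omega>)"
      by (rule Wsum_dyadic) (use i in \<open>auto simp: H_def\<close>)
    also have "\<dots> = (\<Sum>j\<in>{2*H..<3*H}. X j \<omega>) + (\<Sum>j\<in>{3*H..<Suc i}. X j \<omega>)"
      using i by (simp add: H_def atLeastLessThanSuc_atLeastAtMost[symmetric] sum.atLeastLessThan_concat)
    finally show ?thesis by (simp add: mid_sum_def H_def atLeastLessThanSuc_atLeastAtMost)
  qed
  have "real H * (mid_sum q \<omega>)\<^sup>2 + 2 * mid_sum q \<omega> * tail_sum q \<omega> =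
      (\<Sum>i\<in>{3*H..<4*H}. (mid_sum q \<omega>)\<^sup>2 + 2 * mid_sum q \<omega> * (\<Sum>j\<in>{3 * H..i}. X j \<omega>))"
    by (simp add: sum.distrib tail_sum_def H_def sum_distrib_left)
  also have "\<dots> \<le> (\<Sum>i\<in>{3*H..<4*H}. (Wsum a X i \<omega>)\<^sup>2)"
    by (intro sum_mono) (simp add: W power2_eq_square algebra_simps)
  also have "\<dots> \<le> (\<Sum>i\<in>{1..4*H - 1}. (Wsum a X i \<omega>)\<^sup>2)"
    by (rule sum_mono2) (use H1 in auto)
  finally show ?thesis unfolding Vstat_def H_def .
qed

lemma mid_sum_meas: "mid_sum q \<in> borel_measurable M"
  unfolding mid_sum_def[abs_def]
  by (intro borel_measurable_sum X_meas) (simp add: Suc_le_eq)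

lemma tail_sum_meas: "tail_sum q \<in> borel_measurable M"
  unfolding tail_sum_def[abs_def]
  by (intro borel_measurable_sum X_meas) (auto intro: order_trans[rotated] simp: Suc_le_eq)

lemma mid_sum_normal: "distributed M lborel (\<lambda>\<omega>. mid_sum q \<omega> / sqrt (real (2^q))) std_normal_density"
proof -
  define A where "A = {2 * 2^q..<3 * (2::nat)^q}"
  have A1: "A \<subseteq> {1..}" unfolding A_def using one_le_power[of 2 q] by auto
  have "distributed M lborel (\<lambda>x. \<Sum>i\<in>A. X i x) (normal_density (\<Sum>i\<in>A. 0) (sqrt (\<Sum>i\<in>A. 1\<^sup>2)))"
  proof (rule sum_indep_normal)
    show "finite A" "A \<noteq> {}" unfolding A_def by auto
    show "indep_vars (\<lambda>i. borel) X A" by (rule indep_vars_subset[OF X_indep A1])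
    show "\<And>i. i \<in> A \<Longrightarrow> distributed M lborel (X i) (normal_density 0 1)"
      using A1 X_normal by auto
  qed simp
  then have "distributed M lborel (mid_sum q) (normal_density 0 (sqrt (real (2^q))))"
    unfolding mid_sum_def[abs_def] A_def[symmetric] by (simp add: A_def)
  then show ?thesis using normal_standard_normal_convert[of "sqrt (real (2^q))" "mid_sum q" 0] by simp
qed

lemma prob_mid_sum:
  assumes S: "S \<in> sets borel"
  shows "prob {\<omega> \<in> space M. mid_sum q \<omega> / sqrt (real (2^q)) \<in> S} = measure std_normal_measure S"
proof -
  let ?N = "\<lambda>\<omega>. mid_sum q \<omega> / sqrt (real (2^q))"
  have "measure (distr M lborel ?N) S = prob (?N -` S \<inter> space M)"
    by (rule measure_distr[OF distributed_measurable[OF mid_sum_normal]]) (use S in simp)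
  moreover have "distr M lborel ?N = std_normal_measure"
    using distributed_distr_eq_density[OF mid_sum_normal] unfolding std_normal_measure_def .
  moreover have "?N -` S \<inter> space M = {\<omega> \<in> space M. ?N \<omega> \<in> S}" by auto
  ultimately show ?thesis by simp
qed

lemma mid_tail_indep: "indep_var borel (\<lambda>\<omega>. mid_sum q \<omega> / sqrt (real (2^q))) borel (tail_sum q)"
proof -
  define A where "A = {2 * 2^q..<3 * (2::nat)^q}"
  define C where "C = {3 * 2^q..<4 * (2::nat)^q}"
  have A1: "A \<subseteq> {1..}" "C \<subseteq> {1..}" unfolding A_def C_def using one_le_power[of 2 q] by auto
  have "A \<inter> C = {}" unfolding A_def C_def by auto
  from indep_var_restrict[OF X_indep this A1]
  have ind: "indep_var (PiM A (\<lambda>_. borel)) (\<lambda>\<omega>. restrict (\<lambda>i. X i \<omega>) A)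
      (PiM C (\<lambda>_. borel)) (\<lambda>\<omega>. restrict (\<lambda>i. X i \<omega>) C)" .
  define Y1 where "Y1 y = (\<Sum>j\<in>A. y j) / sqrt (real (2^q))" for y :: "nat \<Rightarrow> real"
  define Y2 where "Y2 y = (\<Sum>i\<in>C. \<Sum>j\<in>{3 * 2^q..i}. y j)" for y :: "nat \<Rightarrow> real"
  have m1: "Y1 \<in> borel_measurable (PiM A (\<lambda>_. borel))"
    unfolding Y1_def[abs_def]
    by (intro borel_measurable_divide borel_measurable_sum measurable_component_singleton
        borel_measurable_const) auto
  have m2: "Y2 \<in> borel_measurable (PiM C (\<lambda>_. borel))"
    unfolding Y2_def[abs_def]
    by (intro borel_measurable_sum measurable_component_singleton) (auto simp: C_def)
  have "Y1 \<circ> (\<lambda>\<omega>. restrict (\<lambda>i. X i \<omega>) A) = (\<lambda>\<omega>. mid_sum q \<omega> / sqrt (real (2^q)))"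
    unfolding Y1_def mid_sum_def A_def[symmetric] by (auto intro!: ext sum.cong)
  moreover have "Y2 \<circ> (\<lambda>\<omega>. restrict (\<lambda>i. X i \<omega>) C) = tail_sum q"
    unfolding Y2_def tail_sum_def C_def[symmetric] by (auto intro!: ext sum.cong simp: C_def)
  ultimately show ?thesis using indep_var_compose[OF ind m1 m2] by simp
qed

text \<open>If |T| \<ge> 3 sqrt H and T G \<ge> 0 then V_n \<ge> 9 H^2 > 2 v_n, as v_n = (16 H^2 + 12 H - 4)/6.\<close>

lemma Vstat_ratio_exceeds:
  assumes T: "9 * real (2^q) \<le> (mid_sum q \<omega>)\<^sup>2" and TG: "0 \<le> mid_sum q \<omega> * tail_sum q \<omega>"
  shows "2 < Vstat a X (4 * 2^q - 1) \<omega> / real (vnorm a (4 * 2^q - 1))"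
proof -
  define H :: real where "H = 2^q"
  have H1: "1 \<le> H" unfolding H_def by simp
  have "real (vnorm a (2 ^ Suc (Suc q) - 1)) = (4 ^ Suc (Suc q) + 3 * 2 ^ Suc (Suc q) - 4) / 6"
    by (rule vnorm_pow2_pred[OF a_def])
  then have v: "real (vnorm a (4 * 2^q - 1)) = (16 * H\<^sup>2 + 12 * H - 4) / 6"
    unfolding H_def by (simp add: power2_eq_square flip: power_mult_distrib)
  have "9 * H\<^sup>2 \<le> H * (mid_sum q \<omega>)\<^sup>2"
    using mult_left_mono[OF T, of H] H1 unfolding H_def by (simp add: power2_eq_square)
  also have "\<dots> \<le> H * (mid_sum q \<omega>)\<^sup>2 + 2 * mid_sum q \<omega> * tail_sum q \<omega>"
    using TG by simp
  also have "\<dots> \<le> Vstat a X (4 * 2^q - 1) \<omega>"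
    using Vstat_lower_bound[of q \<omega>] unfolding H_def by simp
  finally have V: "9 * H\<^sup>2 \<le> Vstat a X (4 * 2^q - 1) \<omega>" .
  have "H \<le> H * H" using mult_right_mono[OF H1, of H] H1 by simp
  then have "0 < 16 * H\<^sup>2 + 12 * H - 4" using H1 unfolding power2_eq_square by linarith
  moreover have "2 * (16 * H\<^sup>2 + 12 * H - 4) < 6 * (9 * H\<^sup>2)"
  proof -
    have "0 \<le> (3 * H - 2)\<^sup>2" "0 < H\<^sup>2" using H1 by simp_all
    then show ?thesis by (simp add: power2_eq_square algebra_simps)
  qed
  ultimately show ?thesis using V unfolding v by (simp add: less_divide_eq field_simps)
qed

lemma prob_Vstat_ratio_exceeds:
  "min (measure std_normal_measure {3..4}) (measure std_normal_measure {-4..-3})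
    \<le> prob {\<omega> \<in> space M. \<bar>Vstat a X (4 * 2^q - 1) \<omega> / real (vnorm a (4 * 2^q - 1)) - 1\<bar> > 1}"
proof -
  interpret S: prob_space std_normal_measure by (rule prob_space_std_normal_measure)
  define N where "N \<omega> = mid_sum q \<omega> / sqrt (real (2^q))" for \<omega>
  define G where "G = tail_sum q"
  have [measurable]: "N \<in> borel_measurable M" "G \<in> borel_measurable M"
    unfolding N_def[abs_def] G_def using mid_sum_meas tail_sum_meas by auto
  have Vstat_meas'[measurable]: "Vstat a X (4 * 2^q - 1) \<in> borel_measurable M" by (rule Vstat_meas)
  have upper: "measure std_normal_measure {3..4} \<le> prob {\<omega> \<in> space M. 3 \<le> N \<omega>}"
    using prob_mid_sum[of "{3..}" q] S.finite_measure_mono[of "{3..4}" "{3..}"] unfolding N_def by auto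
  have lower: "measure std_normal_measure {-4..-3} \<le> prob {\<omega> \<in> space M. N \<omega> \<le> -3}"
    using prob_mid_sum[of "{..-3}" q] S.finite_measure_mono[of "{-4..-3}" "{..-3}"] unfolding N_def by auto
  have "min (measure std_normal_measure {3..4}) (measure std_normal_measure {-4..-3})
      \<le> prob {\<omega> \<in> space M. (3 \<le> N \<omega> \<and> 0 \<le> G \<omega>) \<or> (N \<omega> \<le> -3 \<and> G \<omega> < 0)}"
    using prob_tail_same_sign[OF mid_tail_indep[of q, folded N_def G_def], of 3 "-3"] upper lower
    by linarith
  also have "\<dots> \<le> prob {\<omega> \<in> space M. \<bar>Vstat a X (4 * 2^q - 1) \<omega> / real (vnorm a (4 * 2^q - 1)) - 1\<bar> > 1}"
  proof (rule finite_measure_mono)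
    show "{\<omega> \<in> space M. \<bar>Vstat a X (4 * 2^q - 1) \<omega> / real (vnorm a (4 * 2^q - 1)) - 1\<bar> > 1} \<in> events"
      by measurable
    have "2 < Vstat a X (4 * 2^q - 1) \<omega> / real (vnorm a (4 * 2^q - 1))"
      if "(3 \<le> N \<omega> \<and> 0 \<le> G \<omega>) \<or> (N \<omega> \<le> -3 \<and> G \<omega> < 0)" for \<omega>
    proof (rule Vstat_ratio_exceeds)
      have T: "mid_sum q \<omega> = sqrt (real (2^q)) * N \<omega>" unfolding N_def by simp
      have "3 * 3 \<le> \<bar>N \<omega>\<bar> * \<bar>N \<omega>\<bar>" using that by (intro mult_mono) auto
      then have N9: "9 \<le> (N \<omega>)\<^sup>2" by (simp add: power2_eq_square)
      have "(mid_sum q \<omega>)\<^sup>2 = real (2^q) * (N \<omega>)\<^sup>2" unfolding T by (simp add: power_mult_distrib)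
      then show "9 * real (2^q) \<le> (mid_sum q \<omega>)\<^sup>2" using mult_left_mono[OF N9, of "real (2^q)"] by simp
      have "0 \<le> N \<omega> * tail_sum q \<omega>"
        using that unfolding G_def by (auto intro: mult_nonneg_nonneg mult_nonpos_nonpos)
      then show "0 \<le> mid_sum q \<omega> * tail_sum q \<omega>" unfolding T by (simp add: mult.assoc)
    qed
    then show "{\<omega> \<in> space M. (3 \<le> N \<omega> \<and> 0 \<le> G \<omega>) \<or> (N \<omega> \<le> -3 \<and> G \<omega> < 0)}
        \<subseteq> {\<omega> \<in> space M. \<bar>Vstat a X (4 * 2^q - 1) \<omega> / real (vnorm a (4 * 2^q - 1)) - 1\<bar> > 1}"
      by fastforce
  qed
  finally show ?thesis .
qed

lemma not_consistent:
  "\<not> (\<forall>\<epsilon>>0. (\<lambda>n. measure M {\<omega> \<in> space M. \<bar>Vstat a X n \<omega> / real (vnorm a n) - 1\<bar> > \<epsilon>}) \<longlonglongrightarrow> 0)"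
proof
  assume H: "\<forall>\<epsilon>>0. (\<lambda>n. measure M {\<omega> \<in> space M. \<bar>Vstat a X n \<omega> / real (vnorm a n) - 1\<bar> > \<epsilon>}) \<longlonglongrightarrow> 0"
  define f where "f n = prob {\<omega> \<in> space M. \<bar>Vstat a X n \<omega> / real (vnorm a n) - 1\<bar> > 1}" for n
  define c where "c = min (measure std_normal_measure {3..4}) (measure std_normal_measure {-4..-3})"
  have "0 < c" unfolding c_def by (simp add: std_normal_interval_pos)
  have "filterlim (\<lambda>q::nat. 4 * 2^q - 1 :: nat) at_top sequentially"
  proof (rule filterlim_at_top_mono[OF filterlim_ident], intro always_eventually allI)
    fix q :: nat
    have "q < 2^q" by (rule less_exp)
    then show "q \<le> 4 * 2 ^ q - 1" by linarith
  qed
  moreover have "f \<longlonglongrightarrow> 0" using H[rule_format, of 1] unfolding f_def[abs_def] by simp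
  ultimately have "(\<lambda>q. f (4 * 2^q - 1)) \<longlonglongrightarrow> 0" by (rule filterlim_compose[rotated])
  moreover have "\<forall>q. c \<le> f (4 * 2^q - 1)"
    using prob_Vstat_ratio_exceeds unfolding f_def c_def by blast
  ultimately have "c \<le> 0" by (intro LIMSEQ_le_const) auto
  with \<open>0 < c\<close> show False by simp
qed

end

theorem mainTheorem11:
  fixes M :: "'a measure" and X :: "nat \<Rightarrow> 'a \<Rightarrow> real"
    and P :: "'c measure" and \<xi> :: "nat \<Rightarrow> 'c \<Rightarrow> real"
    and Q :: "'b measure" and B :: "real \<Rightarrow> 'b \<Rightarrow> real"
    and a :: "nat \<Rightarrow> nat"
  assumes M: "prob_space M"
    and X_indep: "prob_space.indep_vars M (\<lambda>_. borel) X {1..}"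
    and X_normal: "\<And>i. 1 \<le> i \<Longrightarrow> distributed M lborel (X i) std_normal_density"
    and a_def: "\<And>k. a k = 2 ^ (k - 1)"
    and BM: "brownian_motion Q B"
    and P: "prob_space P"
    and xi_indep: "prob_space.indep_vars P (\<lambda>_. borel) \<xi> UNIV"
    and xi_law: "\<And>j. distr P borel (\<xi> j) = distr Q borel (\<lambda>\<omega>. LBINT t=0..1. (B t \<omega>)\<^sup>2)"
  shows "(\<lambda>m. real (vnorm a (2 ^ m)) / (2 ^ (2 * m) / 6)) \<longlonglongrightarrow> 1
    \<and> weak_conv_m (\<lambda>m. distr M borel (\<lambda>\<omega>. Vstat a X (2 ^ m) \<omega> / real (vnorm a (2 ^ m))))
        (distr P borel (\<lambda>\<omega>. 3 / 2 * (\<Sum>j. \<xi> j \<omega> / 4 ^ j)))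
    \<and> \<not> (\<forall>\<epsilon>>0. (\<lambda>n. measure M {\<omega> \<in> space M. \<bar>Vstat a X n \<omega> / real (vnorm a n) - 1\<bar> > \<epsilon>})
              \<longlonglongrightarrow> 0)"
proof -
  have G: "dyadic_gaussian M X a" by (rule dyadic_gaussian.intro[OF M X_indep X_normal a_def])
  have W: "brownian Q B" by (rule brownian.intro[OF BM])
  show ?thesis
    using vnorm_pow2_asymp[OF a_def] weak_conv_Vstat_pow2[OF G W P xi_indep xi_law]
      dyadic_gaussian.not_consistent[OF G] by blast
qed

end
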